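(* Let $n\in\mathbb{N}$ and $0<\alpha<\beta\le n$. Let $Q$ be an open cube in $\mathbb{R}^n$ with center $x_0$ and let $f$ be a measurable function on $\mathbb{R}^n$ with $\operatorname{supp}f\subseteq2Q$. Then there exists $C=C(n,\alpha,\beta)>0$ such that \[ \int_Q|I_\alpha f|\,d\mathcal{H}^\beta_\infty\le C\,\ell(Q)^\alpha\int_{2Q}|f|\,d\mathcal{H}^\beta_\infty. \]
   Context: $\mathcal{H}^\beta_\infty(E)=\inf\{\sum_i\omega_\beta r_i^\beta:E\subset\bigcup_iB(x_i,r_i)\}$, $\omega_\beta=\pi^{\beta/2}/\Gamma(\beta/2+1)$; integrals against $\mathcal{H}^\beta_\infty$ are Choquet integrals $\int_\Omega h\,d\mathcal{H}^\beta_\infty=\int_0^\infty\mathcal{H}^\beta_\infty(\{x\in\Omega:h>s\})\,ds$. Cubes are axis-parallel, $\ell(Q)$ is the side length, $2Q$ is the concentric cube of side $2\ell(Q)$. $I_\alpha f(x)=\int_{\mathbb{R}^n}f(y)|x-y|^{\alpha-n}\,dy$. *)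

theory Defs
  imports "HOL-Analysis.Analysis"
begin

definition omega :: "real \<Rightarrow> real" where
  "omega \<beta> = pi powr (\<beta> / 2) / Gamma (\<beta> / 2 + 1)"

text \<open>Hausdorff content H^beta_infinity: infimum over countable covers by balls
  (radius 0 allowed, so finite covers are included).\<close>
definition hcontent :: "real \<Rightarrow> 'a::euclidean_space set \<Rightarrow> ennreal" where
  "hcontent \<beta> E = (INF cr \<in> {(c :: nat \<Rightarrow> 'a, r :: nat \<Rightarrow> real).
        (\<forall>i. 0 \<le> r i) \<and> E \<subseteq> (\<Union>i. ball (c i) (r i))}.
      (\<Sum>i. ennreal (omega \<beta> * snd cr i powr \<beta>)))"

definition choquet :: "real \<Rightarrow> 'a::euclidean_space set \<Rightarrow> ('a \<Rightarrow> real) \<Rightarrow> ennreal" where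
  "choquet \<beta> \<Omega> h = (\<integral>\<^sup>+ s \<in> {0..}. hcontent \<beta> {x \<in> \<Omega>. h x > s} \<partial>lborel)"

definition cube :: "'a::euclidean_space \<Rightarrow> real \<Rightarrow> 'a set" where
  "cube x0 l = {x. \<forall>i\<in>Basis. \<bar>(x - x0) \<bullet> i\<bar> < l / 2}"

definition riesz :: "real \<Rightarrow> ('a::euclidean_space \<Rightarrow> real) \<Rightarrow> 'a \<Rightarrow> real" where
  "riesz \<alpha> f x = (\<integral> y. f y * dist x y powr (\<alpha> - real DIM('a)) \<partial>lebesgue)"

end

theory Submission
  imports Defs
begin

text \<open>Decompose \<bar>f\<bar> into layers: for every integer k, cover the level set {\<bar>f\<bar> > 2^k} in 2Q by
  balls B(c_ki, r_ki) whose \<beta>-contents nearly realise its Hausdorff content, so that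
  \<bar>f\<bar> \<le> \<Sum>_ki 2^(k+1) 1_B(c_ki, r_ki) and \<Sum>_k 2^k \<Sum>_i r_ki^\<beta> is at most about \<integral>\<bar>f\<bar> dH^\<beta>_\<infinity>.
  On Q, the Riesz potential of the indicator of a ball B(c, r) is dominated by
  \<Sum>_p w_p 1_B(c, 2^(p+1) r) with w_p \<approx> r^n (2^p r)^(\<alpha>-n), where only scales 2^p r up to the
  diameter of 2Q occur, and each dilate lies in 2^n dyadic cubes of comparable side.
  For a nonnegative combination of indicators of dyadic cubes, a layer-cake argument over the
  nested dyadic grid bounds the Choquet integral by the combination of the sides^\<beta>.
  Finally, since \<beta> \<le> n, \<Sum>_p w_p (2^p r)^\<beta> is at most a constant times r^\<beta> l(Q)^\<alpha>.\<close>

section \<open>Hausdorff content\<close>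

lemma omega_pos: "0 < \<beta> \<Longrightarrow> 0 < omega \<beta>"
  unfolding omega_def by (simp add: Gamma_real_pos)

lemma hcontent_mono: "E \<subseteq> F \<Longrightarrow> hcontent \<beta> E \<le> hcontent \<beta> F"
  unfolding hcontent_def by (rule INF_superset_mono) auto

lemma hcontent_le_cover:
  assumes "\<And>i. 0 \<le> r i" "E \<subseteq> (\<Union>i. ball (c i) (r i))"
  shows "hcontent \<beta> E \<le> (\<Sum>i. ennreal (omega \<beta> * r i powr \<beta>))"
  unfolding hcontent_def by (rule INF_lower2[of "(c, r)"]) (use assms in auto)

lemma hcontent_le_ball:
  assumes "0 \<le> r" "E \<subseteq> ball c r"
  shows "hcontent \<beta> E \<le> ennreal (omega \<beta> * r powr \<beta>)"
proof -
  let ?r = "\<lambda>i::nat. if i = 0 then r else 0"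
  have "hcontent \<beta> E \<le> (\<Sum>i. ennreal (omega \<beta> * ?r i powr \<beta>))"
    by (rule hcontent_le_cover[of ?r _ "\<lambda>_. c"]) (use assms in auto)
  also have "\<dots> = (\<Sum>i\<in>{0}. ennreal (omega \<beta> * ?r i powr \<beta>))"
    by (rule suminf_finite) auto
  finally show ?thesis by simp
qed

lemma hcontent_empty [simp]: "hcontent \<beta> {} = 0"
  using hcontent_le_ball[where r=0 and E="{}" and \<beta>=\<beta>] by simp

lemma hcontent_approx_cover:
  assumes "hcontent \<beta> E < \<infinity>" "0 < e"
  obtains c r where "\<And>i. 0 \<le> r i" "E \<subseteq> (\<Union>i. ball (c i) (r i))"
    "(\<Sum>i. ennreal (omega \<beta> * r i powr \<beta>)) < hcontent \<beta> E + ennreal e"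
proof -
  have "hcontent \<beta> E < hcontent \<beta> E + ennreal e"
    using assms by (simp add: ennreal_add_left_cancel_less)
  then have "\<exists>cr\<in>{(c, r). (\<forall>i. 0 \<le> r i) \<and> E \<subseteq> (\<Union>i. ball (c i) (r i))}.
      (\<Sum>i. ennreal (omega \<beta> * snd cr i powr \<beta>)) < hcontent \<beta> E + ennreal e"
    by (subst (asm) (1) hcontent_def) (simp only: INF_less_iff)
  then show ?thesis using that by auto
qed

lemma hcontent_approx_cover_bounded:
  assumes "0 < \<beta>" "E \<subseteq> ball x0 R" "0 < R" "0 < e"
  obtains c r where "\<And>i. 0 \<le> r i" "\<And>i. r i \<le> R" "E \<subseteq> (\<Union>i. ball (c i) (r i))"
    "(\<Sum>i. ennreal (omega \<beta> * r i powr \<beta>)) < hcontent \<beta> E + ennreal e"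
proof -
  have "hcontent \<beta> E \<le> ennreal (omega \<beta> * R powr \<beta>)"
    using assms(2,3) by (intro hcontent_le_ball) auto
  then have "hcontent \<beta> E < \<infinity>"
    by (rule le_less_trans) simp
  then obtain c r where cr: "\<And>i. 0 \<le> r i" "E \<subseteq> (\<Union>i. ball (c i) (r i))"
    "(\<Sum>i. ennreal (omega \<beta> * r i powr \<beta>)) < hcontent \<beta> E + ennreal e"
    by (rule hcontent_approx_cover[OF _ assms(4)]) blast
  \<comment> \<open>A ball of radius larger than R is replaced by the ball B(x0, R), which contains E.\<close>
  define r' where "r' i = min (r i) R" for i
  define c' where "c' i = (if r i \<le> R then c i else x0)" for i
  show ?thesis
  proof (rule that[of r' c'])
    show "0 \<le> r' i" "r' i \<le> R" for i using cr(1)[of i] assms(3) by (auto simp: r'_def)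
    show "E \<subseteq> (\<Union>i. ball (c' i) (r' i))"
    proof
      fix x assume x: "x \<in> E"
      then obtain i where "x \<in> ball (c i) (r i)" using cr(2) by blast
      then have "x \<in> ball (c' i) (r' i)"
        using x assms(2) by (cases "r i \<le> R") (auto simp: c'_def r'_def)
      then show "x \<in> (\<Union>i. ball (c' i) (r' i))" by blast
    qed
    have "(\<Sum>i. ennreal (omega \<beta> * r' i powr \<beta>)) \<le> (\<Sum>i. ennreal (omega \<beta> * r i powr \<beta>))"
    proof (intro suminf_le ennreal_leI mult_left_mono powr_mono2)
      fix i
      show "0 \<le> r' i" using cr(1)[of i] assms(3) by (simp add: r'_def)
      show "r' i \<le> r i" by (simp add: r'_def)
    qed (use omega_pos[OF assms(1)] assms(1) in auto)
    then show "(\<Sum>i. ennreal (omega \<beta> * r' i powr \<beta>)) < hcontent \<beta> E + ennreal e"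
      using cr(3) by (rule le_less_trans)
  qed
qed

lemma hcontent_UN_le_suminf: "hcontent \<beta> (\<Union>i. E i) \<le> (\<Sum>i. hcontent \<beta> (E i))"
proof (rule ennreal_le_epsilon)
  fix e :: real assume fin: "(\<Sum>i. hcontent \<beta> (E i)) < top" and e: "0 < e"
  define good where "good i cr \<longleftrightarrow> (\<forall>j. 0 \<le> snd cr j) \<and> E i \<subseteq> (\<Union>j. ball (fst cr j) (snd cr j)) \<and>
      (\<Sum>j. ennreal (omega \<beta> * snd cr j powr \<beta>)) < hcontent \<beta> (E i) + ennreal (e * (1/2) ^ Suc i)"
    for i and cr :: "(nat \<Rightarrow> 'a) \<times> (nat \<Rightarrow> real)"
  have "\<exists>cr. good i cr" for i
  proof -
    have "hcontent \<beta> (E i) \<le> (\<Sum>i. hcontent \<beta> (E i))"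
      by (rule sum_le_suminf[of _ "{i}", simplified]) auto
    then have "hcontent \<beta> (E i) < \<infinity>"
      using fin by (simp add: le_less_trans)
    moreover have "0 < e * (1/2) ^ Suc i" using e by simp
    ultimately obtain c r where "\<And>j. 0 \<le> r j" "E i \<subseteq> (\<Union>j. ball (c j) (r j))"
      "(\<Sum>j. ennreal (omega \<beta> * r j powr \<beta>)) < hcontent \<beta> (E i) + ennreal (e * (1/2) ^ Suc i)"
      by (rule hcontent_approx_cover) blast
    then show ?thesis unfolding good_def by (intro exI[of _ "(c, r)"]) auto
  qed
  then obtain CR where "\<And>i. good i (CR i)" by metis
  then have CR: "\<And>i. \<forall>j. 0 \<le> snd (CR i) j" "\<And>i. E i \<subseteq> (\<Union>j. ball (fst (CR i) j) (snd (CR i) j))"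
    "\<And>i. (\<Sum>j. ennreal (omega \<beta> * snd (CR i) j powr \<beta>)) < hcontent \<beta> (E i) + ennreal (e * (1/2) ^ Suc i)"
    unfolding good_def by blast+
  define c where "c k = fst (CR (fst (prod_decode k))) (snd (prod_decode k))" for k
  define r where "r k = snd (CR (fst (prod_decode k))) (snd (prod_decode k))" for k
  have "hcontent \<beta> (\<Union>i. E i) \<le> (\<Sum>k. ennreal (omega \<beta> * r k powr \<beta>))"
  proof (rule hcontent_le_cover)
    show "0 \<le> r k" for k using CR(1) by (simp add: r_def)
    show "(\<Union>i. E i) \<subseteq> (\<Union>k. ball (c k) (r k))"
    proof
      fix x assume "x \<in> (\<Union>i. E i)"
      then obtain i j where "x \<in> ball (fst (CR i) j) (snd (CR i) j)" using CR(2) by blast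
      then show "x \<in> (\<Union>k. ball (c k) (r k))"
        by (intro UN_I[of "prod_encode (i, j)"]) (simp_all add: c_def r_def)
    qed
  qed
  also have "(\<Sum>k. ennreal (omega \<beta> * r k powr \<beta>)) = (\<Sum>i. \<Sum>j. ennreal (omega \<beta> * snd (CR i) j powr \<beta>))"
    unfolding r_def
    using suminf_ennreal_2dimen[where f = "\<lambda>p. ennreal (omega \<beta> * snd (CR (fst p)) (snd p) powr \<beta>)"]
    by simp
  also have "\<dots> \<le> (\<Sum>i. hcontent \<beta> (E i) + ennreal (e * (1/2) ^ Suc i))"
    by (intro suminf_le) (use CR(3) in \<open>auto simp: less_imp_le\<close>)
  also have "\<dots> = (\<Sum>i. hcontent \<beta> (E i)) + (\<Sum>i. ennreal (e * (1/2) ^ Suc i))"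
    by (rule suminf_add[symmetric]) auto
  also have "(\<Sum>i. ennreal (e * (1/2) ^ Suc i)) = ennreal e"
    using sums_mult[OF power_half_series, of e] e by (intro suminf_ennreal_eq) auto
  finally show "hcontent \<beta> (\<Union>i. E i) \<le> (\<Sum>i. hcontent \<beta> (E i)) + ennreal e" .
qed

lemma hcontent_UN_countable_le:
  assumes "countable I"
  shows "hcontent \<beta> (\<Union>i\<in>I. E i) \<le> (\<integral>\<^sup>+ i. hcontent \<beta> (E i) \<partial>count_space I)"
proof -
  define F where "F p = (if p \<in> to_nat_on I ` I then E (from_nat_into I p) else {})" for p
  have "(\<Union>i\<in>I. E i) \<subseteq> (\<Union>p. F p)"
  proof
    fix x assume "x \<in> (\<Union>i\<in>I. E i)"
    then obtain i where "i \<in> I" "x \<in> E i" by blast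
    then have "x \<in> F (to_nat_on I i)" using assms by (simp add: F_def)
    then show "x \<in> (\<Union>p. F p)" by blast
  qed
  then have "hcontent \<beta> (\<Union>i\<in>I. E i) \<le> (\<Sum>p. hcontent \<beta> (F p))"
    by (rule order_trans[OF hcontent_mono hcontent_UN_le_suminf])
  also have "\<dots> = (\<integral>\<^sup>+ p. hcontent \<beta> (F p) \<partial>count_space UNIV)"
    by (simp add: nn_integral_count_space_nat)
  also have "\<dots> = (\<integral>\<^sup>+ p. hcontent \<beta> (F p) * indicator (to_nat_on I ` I) p \<partial>count_space UNIV)"
    by (intro nn_integral_cong) (simp add: F_def indicator_def)
  also have "\<dots> = (\<integral>\<^sup>+ p. hcontent \<beta> (F p) \<partial>count_space (to_nat_on I ` I))"
    by (simp add: nn_integral_count_space_indicator)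
  also have "\<dots> = (\<integral>\<^sup>+ i. hcontent \<beta> (F (to_nat_on I i)) \<partial>count_space I)"
    by (rule nn_integral_bij_count_space[symmetric])
      (use assms in \<open>simp add: bij_betw_def inj_on_to_nat_on\<close>)
  also have "\<dots> = (\<integral>\<^sup>+ i. hcontent \<beta> (E i) \<partial>count_space I)"
    by (intro nn_integral_cong) (use assms in \<open>simp add: F_def\<close>)
  finally show ?thesis .
qed

section \<open>A layer-cake bound for Choquet integrals\<close>

lemma emeasure_ennreal_interval_le:
  "emeasure lborel {s::real. 0 \<le> s \<and> a \<le> ennreal s \<and> ennreal s < a + c} \<le> c"
proof (cases "a = top \<or> c = top")
  case True
  then show ?thesis by (auto simp: top_unique)
next
  case False
  then obtain a' c' where fin: "a = ennreal a'" "0 \<le> a'" "c = ennreal c'" "0 \<le> c'"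
    by (metis ennreal_cases)
  have "{s::real. 0 \<le> s \<and> a \<le> ennreal s \<and> ennreal s < a + c} \<subseteq> {a'..a'+c'}"
    using fin by (auto simp: ennreal_less_iff simp flip: ennreal_plus)
  then have "emeasure lborel {s::real. 0 \<le> s \<and> a \<le> ennreal s \<and> ennreal s < a + c} \<le> emeasure lborel {a'..a'+c'}"
    by (intro emeasure_mono) auto
  also have "\<dots> = c" using fin by simp
  finally show ?thesis .
qed

lemma ennreal_interval_borel:
  "{s::real. 0 \<le> s \<and> a \<le> ennreal s \<and> ennreal s < b} \<in> sets borel"
proof -
  have "{s::real. 0 \<le> s \<and> a \<le> ennreal s \<and> ennreal s < b} = {0..} \<inter> (ennreal -` ({a..} \<inter> {..<b}) \<inter> space borel)"
    by auto
  moreover have "ennreal -` ({a..} \<inter> {..<b}) \<inter> space borel \<in> sets borel"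
    by (rule measurable_sets[OF measurable_ennreal]) (intro sets.Int borel_closed borel_open closed_atLeast open_lessThan)
  ultimately show ?thesis by auto
qed

lemma choquet_le_layers:
  fixes cell :: "'d \<Rightarrow> 'a::euclidean_space set" and lo len :: "'d \<Rightarrow> ennreal"
  assumes D: "countable D"
    and cover: "\<And>s. 0 \<le> s \<Longrightarrow>
      {x\<in>\<Omega>. h x > s} \<subseteq> (\<Union>d\<in>{d\<in>D. lo d \<le> ennreal s \<and> ennreal s < lo d + len d}. cell d)"
  shows "choquet \<beta> \<Omega> h \<le> (\<integral>\<^sup>+ d. hcontent \<beta> (cell d) * len d \<partial>count_space D)"
proof -
  define I where "I d = {s::real. 0 \<le> s \<and> lo d \<le> ennreal s \<and> ennreal s < lo d + len d}" for d
  have I_borel: "I d \<in> sets borel" for d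
    unfolding I_def by (rule ennreal_interval_borel)
  have level: "hcontent \<beta> {x\<in>\<Omega>. h x > s} * indicator {0..} s
      \<le> (\<integral>\<^sup>+ d. hcontent \<beta> (cell d) * indicator (I d) s \<partial>count_space D)" for s
  proof (cases "0 \<le> s")
    case True
    have "{d\<in>D. lo d \<le> ennreal s \<and> ennreal s < lo d + len d} = {d\<in>D. s \<in> I d}"
      using True by (auto simp: I_def)
    then have "hcontent \<beta> {x\<in>\<Omega>. h x > s} \<le> hcontent \<beta> (\<Union>d\<in>{d\<in>D. s \<in> I d}. cell d)"
      using cover[OF True] by (intro hcontent_mono) simp
    also have "\<dots> \<le> (\<integral>\<^sup>+ d. hcontent \<beta> (cell d) \<partial>count_space {d\<in>D. s \<in> I d})"
      by (rule hcontent_UN_countable_le) (use countable_subset[OF _ D] in auto)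
    also have "\<dots> = (\<integral>\<^sup>+ d. hcontent \<beta> (cell d) * indicator {d\<in>D. s \<in> I d} d \<partial>count_space UNIV)"
      by (rule nn_integral_count_space_indicator) simp
    also have "\<dots> = (\<integral>\<^sup>+ d. hcontent \<beta> (cell d) * indicator (I d) s * indicator D d \<partial>count_space UNIV)"
      by (intro nn_integral_cong) (auto simp: indicator_def)
    also have "\<dots> = (\<integral>\<^sup>+ d. hcontent \<beta> (cell d) * indicator (I d) s \<partial>count_space D)"
      by (rule nn_integral_count_space_indicator[symmetric]) simp
    finally show ?thesis using True by simp
  qed simp
  have "choquet \<beta> \<Omega> h \<le> (\<integral>\<^sup>+ s. (\<integral>\<^sup>+ d. hcontent \<beta> (cell d) * indicator (I d) s \<partial>count_space D) \<partial>lborel)"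
    unfolding choquet_def by (intro nn_integral_mono level)
  also have "\<dots> = (\<integral>\<^sup>+ d. (\<integral>\<^sup>+ s. hcontent \<beta> (cell d) * indicator (I d) s \<partial>lborel) \<partial>count_space D)"
    by (rule nn_integral_count_space_nn_integral[OF D]) (use I_borel in simp)
  also have "\<dots> = (\<integral>\<^sup>+ d. hcontent \<beta> (cell d) * emeasure lborel (I d) \<partial>count_space D)"
    by (intro nn_integral_cong nn_integral_cmult_indicator) (use I_borel in simp)
  also have "\<dots> \<le> (\<integral>\<^sup>+ d. hcontent \<beta> (cell d) * len d \<partial>count_space D)"
    unfolding I_def by (intro nn_integral_mono mult_left_mono emeasure_ennreal_interval_le) simp
  finally show ?thesis .
qed

section \<open>The dyadic grid\<close>

definition dyadic_side :: "real \<Rightarrow> nat \<Rightarrow> real" where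
  "dyadic_side L k = L / 2 ^ k"

definition dyadic_index :: "real \<Rightarrow> nat \<Rightarrow> 'a::euclidean_space \<Rightarrow> ('a \<Rightarrow> int)" where
  "dyadic_index L k x = (\<lambda>i\<in>Basis. \<lfloor>(x \<bullet> i) / dyadic_side L k\<rfloor>)"

definition dyadic_corner :: "real \<Rightarrow> nat \<Rightarrow> ('a::euclidean_space \<Rightarrow> int) \<Rightarrow> 'a" where
  "dyadic_corner L k z = (\<Sum>i\<in>Basis. (of_int (z i) * dyadic_side L k) *\<^sub>R i)"

definition dyadic_cube :: "real \<Rightarrow> nat \<Rightarrow> ('a::euclidean_space \<Rightarrow> int) \<Rightarrow> 'a set" where
  "dyadic_cube L k z = {x. dyadic_index L k x = z}"

lemma dyadic_side_pos: "0 < L \<Longrightarrow> 0 < dyadic_side L k"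
  by (simp add: dyadic_side_def)

lemma dyadic_index_PiE: "dyadic_index L k x \<in> PiE Basis (\<lambda>_. UNIV)"
  by (simp add: dyadic_index_def)

lemma inner_dyadic_corner: "i \<in> Basis \<Longrightarrow> dyadic_corner L k z \<bullet> i = of_int (z i) * dyadic_side L k"
  by (simp add: dyadic_corner_def inner_sum_left inner_Basis if_distrib cong: if_cong)

lemma dyadic_index_corner:
  assumes "0 < L" "z \<in> PiE Basis (\<lambda>_. UNIV)"
  shows "dyadic_index L k (dyadic_corner L k z) = z"
proof
  fix i show "dyadic_index L k (dyadic_corner L k z) i = z i"
  proof (cases "i \<in> Basis")
    case True
    then show ?thesis using dyadic_side_pos[OF assms(1), of k] by (simp add: dyadic_index_def inner_dyadic_corner)
  next
    case False
    then show ?thesis using assms(2) by (simp add: dyadic_index_def PiE_def extensional_def)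
  qed
qed

lemma floor_divide_dyadic_side:
  assumes "0 < L" "k' \<le> k"
  shows "\<lfloor>t / dyadic_side L k'\<rfloor> = \<lfloor>t / dyadic_side L k\<rfloor> div 2 ^ (k - k')"
proof -
  have e: "(2::real) ^ k = 2 ^ (k - k') * 2 ^ k'"
    using assms(2) by (simp flip: power_add)
  have "t / dyadic_side L k' = (t / dyadic_side L k) / real_of_int (2 ^ (k - k'))"
    using assms(1) unfolding of_int_power of_int_numeral dyadic_side_def e by (simp add: field_simps)
  then have "\<lfloor>t / dyadic_side L k'\<rfloor> = \<lfloor>(t / dyadic_side L k) / real_of_int (2 ^ (k - k'))\<rfloor>"
    by (rule arg_cong)
  also have "\<dots> = \<lfloor>t / dyadic_side L k\<rfloor> div 2 ^ (k - k')"
    by (rule floor_divide_real_eq_div) simp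
  finally show ?thesis .
qed

lemma dyadic_index_coarsen:
  assumes "0 < L" "k' \<le> k" "dyadic_index L k x = dyadic_index L k y"
  shows "dyadic_index L k' x = dyadic_index L k' y"
proof
  fix i show "dyadic_index L k' x i = dyadic_index L k' y i"
  proof (cases "i \<in> Basis")
    case True
    have "dyadic_index L k x i = dyadic_index L k y i" using assms(3) by simp
    then have "\<lfloor>(x \<bullet> i) / dyadic_side L k\<rfloor> = \<lfloor>(y \<bullet> i) / dyadic_side L k\<rfloor>"
      using True by (simp add: dyadic_index_def)
    then show ?thesis using True by (simp add: dyadic_index_def floor_divide_dyadic_side[OF assms(1,2)])
  qed (simp add: dyadic_index_def)
qed

lemma norm_lt_of_coordinates_lt:
  fixes v :: "'a::euclidean_space"
  assumes "\<And>i. i \<in> Basis \<Longrightarrow> \<bar>v \<bullet> i\<bar> < t"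
  shows "norm v < real DIM('a) * t"
proof -
  have "(\<Sum>i\<in>Basis. \<bar>v \<bullet> i\<bar>) < (\<Sum>i\<in>(Basis::'a set). t)"
    using assms by (intro sum_strict_mono) auto
  then show ?thesis using norm_le_l1[of v] by simp
qed

lemma dyadic_cube_subset_ball:
  fixes z :: "'a::euclidean_space \<Rightarrow> int"
  assumes "0 < L"
  shows "dyadic_cube L k z \<subseteq> ball (dyadic_corner L k z) (real DIM('a) * dyadic_side L k)"
proof
  fix x :: 'a assume "x \<in> dyadic_cube L k z"
  then have z: "z = dyadic_index L k x" by (simp add: dyadic_cube_def)
  have s: "0 < dyadic_side L k" using dyadic_side_pos[OF assms] .
  have "\<bar>(x - dyadic_corner L k z) \<bullet> i\<bar> < dyadic_side L k" if "i \<in> Basis" for i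
  proof -
    have "(x - dyadic_corner L k z) \<bullet> i = x \<bullet> i - of_int \<lfloor>(x \<bullet> i) / dyadic_side L k\<rfloor> * dyadic_side L k"
      using that by (simp add: inner_diff_left inner_dyadic_corner z dyadic_index_def)
    moreover have "of_int \<lfloor>(x \<bullet> i) / dyadic_side L k\<rfloor> * dyadic_side L k \<le> x \<bullet> i"
      using s by (metis floor_divide_lower)
    moreover have "x \<bullet> i < (of_int \<lfloor>(x \<bullet> i) / dyadic_side L k\<rfloor> + 1) * dyadic_side L k"
      using s by (metis floor_divide_upper)
    ultimately show ?thesis by (simp add: algebra_simps)
  qed
  then have "norm (x - dyadic_corner L k z) < real DIM('a) * dyadic_side L k"
    by (rule norm_lt_of_coordinates_lt)
  then show "x \<in> ball (dyadic_corner L k z) (real DIM('a) * dyadic_side L k)"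
    by (simp add: dist_norm norm_minus_commute)
qed

lemma hcontent_dyadic_cube_le:
  fixes z :: "'a::euclidean_space \<Rightarrow> int"
  assumes "0 < L" "0 < \<beta>"
  shows "hcontent \<beta> (dyadic_cube L k z)
    \<le> ennreal (omega \<beta> * real DIM('a) powr \<beta>) * ennreal (dyadic_side L k powr \<beta>)"
proof -
  have s: "0 < dyadic_side L k" using dyadic_side_pos[OF assms(1)] .
  have "hcontent \<beta> (dyadic_cube L k z) \<le> ennreal (omega \<beta> * (real DIM('a) * dyadic_side L k) powr \<beta>)"
    by (rule hcontent_le_ball[OF _ dyadic_cube_subset_ball[OF assms(1)]]) (use s in simp)
  also have "\<dots> = ennreal (omega \<beta> * real DIM('a) powr \<beta>) * ennreal (dyadic_side L k powr \<beta>)"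
    using s omega_pos[OF assms(2)] by (simp add: powr_mult ennreal_mult[symmetric] mult.assoc)
  finally show ?thesis .
qed

section \<open>Choquet integrals of combinations of dyadic cubes\<close>

text \<open>The parameters describe \<Sum>_j b j * indicator (Z j) (dyadic_index L (lev j) x): its j-th
  term is the union of the dyadic cubes of level lev j with indices in Z j, weighted by b j.
  dyadic_mass P keeps the terms whose level satisfies P; the layer of the cube d = (k, z) lies
  between the partial sums over the levels < k and \<le> k on that cube.\<close>

context
  fixes L :: real and b :: "nat \<Rightarrow> ennreal" and lev :: "nat \<Rightarrow> nat"
    and Z :: "nat \<Rightarrow> ('a::euclidean_space \<Rightarrow> int) set"
begin

definition dyadic_mass :: "(nat \<Rightarrow> bool) \<Rightarrow> 'a \<Rightarrow> ennreal" where
  "dyadic_mass P x = (\<Sum>j. b j * of_bool (P (lev j) \<and> dyadic_index L (lev j) x \<in> Z j))"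

definition dyadic_layer_base :: "nat \<times> ('a \<Rightarrow> int) \<Rightarrow> ennreal" where
  "dyadic_layer_base d = dyadic_mass (\<lambda>m. m < fst d) (dyadic_corner L (fst d) (snd d))"

definition dyadic_layer_width :: "nat \<times> ('a \<Rightarrow> int) \<Rightarrow> ennreal" where
  "dyadic_layer_width d = dyadic_mass (\<lambda>m. m = fst d) (dyadic_corner L (fst d) (snd d))"

lemma dyadic_mass_True:
  "dyadic_mass (\<lambda>_. True) x = (\<Sum>j. b j * indicator (Z j) (dyadic_index L (lev j) x))"
  unfolding dyadic_mass_def by (simp add: indicator_def)

lemma dyadic_mass_False [simp]: "dyadic_mass (\<lambda>_. False) x = 0"
  by (simp add: dyadic_mass_def)

lemma dyadic_mass_less_Suc:
  "dyadic_mass (\<lambda>m. m < Suc k) x = dyadic_mass (\<lambda>m. m < k) x + dyadic_mass (\<lambda>m. m = k) x"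
proof -
  let ?I = "\<lambda>j. dyadic_index L (lev j) x \<in> Z j"
  have "(\<lambda>j. b j * of_bool (lev j < Suc k \<and> ?I j))
      = (\<lambda>j. b j * of_bool (lev j < k \<and> ?I j) + b j * of_bool (lev j = k \<and> ?I j))"
    by (auto simp: less_Suc_eq)
  then show ?thesis
    unfolding dyadic_mass_def by (simp add: suminf_add)
qed

lemma dyadic_mass_cong:
  assumes "0 < L" "\<And>m. P m \<Longrightarrow> m \<le> k" "dyadic_index L k x = dyadic_index L k y"
  shows "dyadic_mass P x = dyadic_mass P y"
  unfolding dyadic_mass_def
proof (intro suminf_cong)
  fix j
  have "P (lev j) \<Longrightarrow> dyadic_index L (lev j) x = dyadic_index L (lev j) y"
    using dyadic_index_coarsen[OF assms(1) _ assms(3)] assms(2) by blast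
  then show "b j * of_bool (P (lev j) \<and> dyadic_index L (lev j) x \<in> Z j)
      = b j * of_bool (P (lev j) \<and> dyadic_index L (lev j) y \<in> Z j)"
    by auto
qed

lemma dyadic_mass_exceeds_at_finite_level:
  assumes "s < dyadic_mass (\<lambda>_. True) x"
  obtains k where "s < dyadic_mass (\<lambda>m. m < k) x"
proof -
  let ?t = "\<lambda>j. b j * of_bool (dyadic_index L (lev j) x \<in> Z j)"
  have "dyadic_mass (\<lambda>_. True) x = (SUP N. \<Sum>j<N. ?t j)"
    unfolding dyadic_mass_def by (simp add: suminf_eq_SUP)
  then obtain N where N: "s < (\<Sum>j<N. ?t j)"
    using assms by (auto simp: less_SUP_iff)
  define K where "K = Suc (\<Sum>j<N. lev j)"
  have "(\<Sum>j<N. ?t j) \<le> (\<Sum>j<N. b j * of_bool (lev j < K \<and> dyadic_index L (lev j) x \<in> Z j))"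
  proof (intro sum_mono)
    fix j assume "j \<in> {..<N}"
    then have "lev j < K" unfolding K_def using member_le_sum[of j "{..<N}" lev] by simp
    then show "?t j \<le> b j * of_bool (lev j < K \<and> dyadic_index L (lev j) x \<in> Z j)" by simp
  qed
  also have "\<dots> \<le> dyadic_mass (\<lambda>m. m < K) x"
    unfolding dyadic_mass_def by (rule sum_le_suminf) auto
  finally show ?thesis using N that by (meson less_le_trans)
qed

text \<open>Each level set of the sum is covered by the dyadic cubes at the level where the partial
  sums over coarser cubes first exceed the height.\<close>

lemma level_set_subset_dyadic_layers:
  assumes L: "0 < L" and s: "0 \<le> s"
    and h: "\<And>x. x \<in> \<Omega> \<Longrightarrow> ennreal (h x) \<le> dyadic_mass (\<lambda>_. True) x"
  shows "{x\<in>\<Omega>. h x > s} \<subseteq> (\<Union>d\<in>{d\<in>UNIV \<times> PiE Basis (\<lambda>_. UNIV).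
      dyadic_layer_base d \<le> ennreal s \<and> ennreal s < dyadic_layer_base d + dyadic_layer_width d}.
      dyadic_cube L (fst d) (snd d))"
proof
  fix x assume x: "x \<in> {x\<in>\<Omega>. h x > s}"
  then have "ennreal s < ennreal (h x)"
    using s by (intro ennreal_lessI) auto
  also have "\<dots> \<le> dyadic_mass (\<lambda>_. True) x"
    using x h by blast
  finally have "ennreal s < dyadic_mass (\<lambda>_. True) x" .
  then obtain k1 where "ennreal s < dyadic_mass (\<lambda>m. m < k1) x"
    by (rule dyadic_mass_exceeds_at_finite_level)
  then have ex: "\<exists>k. ennreal s < dyadic_mass (\<lambda>m. m < k) x" ..
  define k0 where "k0 = (LEAST k. ennreal s < dyadic_mass (\<lambda>m. m < k) x)"
  have k0: "ennreal s < dyadic_mass (\<lambda>m. m < k0) x"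
    unfolding k0_def by (rule LeastI_ex[OF ex])
  then obtain k where k: "k0 = Suc k"
    by (cases k0) auto
  have below: "dyadic_mass (\<lambda>m. m < k) x \<le> ennreal s"
    using not_less_Least[of k "\<lambda>k. ennreal s < dyadic_mass (\<lambda>m. m < k) x"] k
    unfolding k0_def by (auto simp: not_less)
  define z where "z = dyadic_index L k x"
  have "dyadic_index L k (dyadic_corner L k z) = dyadic_index L k x"
    using dyadic_index_corner[OF L dyadic_index_PiE] by (simp add: z_def)
  then have "dyadic_layer_base (k, z) = dyadic_mass (\<lambda>m. m < k) x"
    "dyadic_layer_width (k, z) = dyadic_mass (\<lambda>m. m = k) x"
    unfolding dyadic_layer_base_def dyadic_layer_width_def
    by (auto intro!: dyadic_mass_cong[OF L])
  then have "(k, z) \<in> {d\<in>UNIV \<times> PiE Basis (\<lambda>_. UNIV).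
      dyadic_layer_base d \<le> ennreal s \<and> ennreal s < dyadic_layer_base d + dyadic_layer_width d}"
    using k0 k below by (simp add: z_def dyadic_index_PiE dyadic_mass_less_Suc)
  moreover have "x \<in> dyadic_cube L k z"
    by (simp add: dyadic_cube_def z_def)
  ultimately show "x \<in> (\<Union>d\<in>{d\<in>UNIV \<times> PiE Basis (\<lambda>_. UNIV).
      dyadic_layer_base d \<le> ennreal s \<and> ennreal s < dyadic_layer_base d + dyadic_layer_width d}.
      dyadic_cube L (fst d) (snd d))"
    by force
qed

lemma dyadic_layer_width_eq:
  assumes "0 < L" "z \<in> PiE Basis (\<lambda>_. UNIV)"
  shows "dyadic_layer_width (k, z) = (\<Sum>j. b j * indicator ({lev j} \<times> Z j) (k, z))"
  unfolding dyadic_layer_width_def dyadic_mass_def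
  using dyadic_index_corner[OF assms] by (intro suminf_cong) (auto simp: indicator_def)

theorem choquet_le_dyadic_sum:
  assumes L: "0 < L" and \<beta>: "0 < \<beta>"
    and Z: "\<And>j. finite (Z j)" "\<And>j. Z j \<subseteq> PiE Basis (\<lambda>_. UNIV)"
    and h: "\<And>x. x \<in> \<Omega> \<Longrightarrow> ennreal (h x) \<le> (\<Sum>j. b j * indicator (Z j) (dyadic_index L (lev j) x))"
  shows "choquet \<beta> \<Omega> h \<le> ennreal (omega \<beta> * real DIM('a) powr \<beta>) *
    (\<Sum>j. b j * of_nat (card (Z j)) * ennreal (dyadic_side L (lev j) powr \<beta>))"
proof -
  define D :: "(nat \<times> ('a \<Rightarrow> int)) set" where "D = UNIV \<times> PiE Basis (\<lambda>_. UNIV)"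
  define c where "c = ennreal (omega \<beta> * real DIM('a) powr \<beta>)"
  define w where "w j = c * b j * ennreal (dyadic_side L (lev j) powr \<beta>)" for j
  have "countable D"
    unfolding D_def by (intro countable_SIGMA countable_PiE) auto
  then have "choquet \<beta> \<Omega> h
      \<le> (\<integral>\<^sup>+ d. hcontent \<beta> (dyadic_cube L (fst d) (snd d)) * dyadic_layer_width d \<partial>count_space D)"
    by (rule choquet_le_layers)
      (unfold D_def, rule level_set_subset_dyadic_layers[OF L], auto simp: dyadic_mass_True h)
  also have "\<dots> \<le> (\<integral>\<^sup>+ d. (\<Sum>j. w j * indicator ({lev j} \<times> Z j) d) \<partial>count_space D)"
  proof (intro nn_integral_mono)
    fix d assume "d \<in> space (count_space D)"
    then have width: "dyadic_layer_width d = (\<Sum>j. b j * indicator ({lev j} \<times> Z j) d)"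
      using dyadic_layer_width_eq[OF L] by (cases d) (simp add: D_def)
    have "hcontent \<beta> (dyadic_cube L (fst d) (snd d)) * dyadic_layer_width d
        \<le> c * ennreal (dyadic_side L (fst d) powr \<beta>) * dyadic_layer_width d"
      unfolding c_def by (intro mult_right_mono hcontent_dyadic_cube_le L \<beta>) simp
    also have "\<dots> = (\<Sum>j. w j * indicator ({lev j} \<times> Z j) d)"
      unfolding width ennreal_suminf_cmult[symmetric]
      by (intro suminf_cong) (auto simp: w_def indicator_def mult_ac)
    finally show "hcontent \<beta> (dyadic_cube L (fst d) (snd d)) * dyadic_layer_width d
        \<le> (\<Sum>j. w j * indicator ({lev j} \<times> Z j) d)" .
  qed
  also have "\<dots> = (\<Sum>j. \<integral>\<^sup>+ d. w j * indicator ({lev j} \<times> Z j) d \<partial>count_space D)"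
    by (rule nn_integral_suminf) simp
  also have "\<dots> = (\<Sum>j. w j * of_nat (card (Z j)))"
  proof (intro suminf_cong)
    fix j
    have "{lev j} \<times> Z j \<subseteq> D" using Z(2) by (auto simp: D_def)
    then show "(\<integral>\<^sup>+ d. w j * indicator ({lev j} \<times> Z j) d \<partial>count_space D) = w j * of_nat (card (Z j))"
      using Z(1) by (simp add: nn_integral_cmult_indicator card_cartesian_product_singleton)
  qed
  also have "\<dots> = c * (\<Sum>j. b j * of_nat (card (Z j)) * ennreal (dyadic_side L (lev j) powr \<beta>))"
    unfolding w_def ennreal_suminf_cmult[symmetric] by (simp add: mult_ac)
  finally show ?thesis unfolding c_def .
qed

end

section \<open>The Riesz kernel on balls and annuli\<close>

lemma ennreal_le_suminf_term: "(f j :: ennreal) \<le> suminf f"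
  using sum_le_suminf[of f "{j}"] by simp

lemma dyadic_scale_bounds:
  fixes u :: real
  assumes "1 \<le> u"
  shows "2 ^ nat \<lfloor>log 2 u\<rfloor> \<le> u" "u < 2 ^ Suc (nat \<lfloor>log 2 u\<rfloor>)"
proof -
  define j where "j = nat \<lfloor>log 2 u\<rfloor>"
  have u: "0 < u" "0 \<le> log 2 u" using assms by simp_all
  then have "real j \<le> log 2 u" "log 2 u < real j + 1"
    unfolding j_def by linarith+
  then have "2 powr real j \<le> u" "u < 2 powr (real j + 1)"
    using u by (simp_all add: le_log_iff log_less_iff)
  then show "2 ^ nat \<lfloor>log 2 u\<rfloor> \<le> u" "u < 2 ^ Suc (nat \<lfloor>log 2 u\<rfloor>)"
    unfolding j_def[symmetric] by (simp_all add: powr_realpow powr_add)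
qed

lemma exists_dyadic_scale:
  fixes u :: real
  assumes "1 \<le> u"
  obtains j :: nat where "2 ^ j \<le> u" "u < 2 ^ Suc j"
  using dyadic_scale_bounds[OF assms] by blast

lemma emeasure_cball_le:
  fixes c :: "'a::euclidean_space"
  assumes "0 \<le> r"
  shows "emeasure lborel (cball c r) \<le> ennreal ((2 * r) ^ DIM('a))"
proof -
  have "cball c r \<subseteq> cbox (c - r *\<^sub>R One) (c + r *\<^sub>R One)"
  proof
    fix y assume "y \<in> cball c r"
    then have "norm (y - c) \<le> r" by (simp add: dist_norm norm_minus_commute)
    then have "\<bar>(y - c) \<bullet> i\<bar> \<le> r" if "i \<in> Basis" for i using Basis_le_norm[OF that, of "y - c"] by simp
    then show "y \<in> cbox (c - r *\<^sub>R One) (c + r *\<^sub>R One)"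
      by (auto simp: mem_box inner_diff_left inner_add_left abs_le_iff algebra_simps)
  qed
  then have "emeasure lborel (cball c r) \<le> emeasure lborel (cbox (c - r *\<^sub>R One) (c + r *\<^sub>R One))"
    by (intro emeasure_mono) auto
  also have "\<dots> = ennreal ((2 * r) ^ DIM('a))"
    using assms by (simp add: emeasure_lborel_cbox_eq inner_diff_left inner_add_left algebra_simps)
  finally show ?thesis .
qed

definition riesz_ball_const :: "real \<Rightarrow> real \<Rightarrow> real" where
  "riesz_ball_const \<alpha> n = 2 powr (2 * n - \<alpha>) / (1 - 2 powr (- \<alpha>))"

lemma riesz_ball_const_pos: "0 < \<alpha> \<Longrightarrow> 0 < riesz_ball_const \<alpha> n"
  unfolding riesz_ball_const_def by (simp add: powr_minus_divide)

lemma dyadic_shell_powr_eq: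
  assumes "0 < R" "n = real m"
  shows "(R / 2 ^ Suc j) powr (\<alpha> - n) * (2 * (R / 2 ^ j)) ^ m
       = R powr \<alpha> * 2 powr (2 * n - \<alpha>) * (2 powr (- \<alpha>)) ^ j"
proof -
  define \<rho> where "\<rho> = R / 2 ^ j"
  have \<rho>: "0 < \<rho>" using assms by (simp add: \<rho>_def)
  have eq: "R / 2 ^ Suc j = \<rho> / 2" by (simp add: \<rho>_def)
  have eq2: "(2 * \<rho>) ^ m = (2 * \<rho>) powr n" using \<rho> assms(2) by (simp add: powr_realpow)
  have "(R / 2 ^ Suc j) powr (\<alpha> - n) * (2 * (R / 2 ^ j)) ^ m = (\<rho> / 2) powr (\<alpha> - n) * (2 * \<rho>) powr n"
    unfolding eq \<rho>_def[symmetric] eq2 ..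
  also have "\<dots> = \<rho> powr \<alpha> * 2 powr (2 * n - \<alpha>)"
    using \<rho> by (simp add: powr_divide powr_mult powr_diff powr_add field_simps flip: powr_add)
  also have "\<rho> powr \<alpha> = R powr \<alpha> * (2 powr (- \<alpha>)) ^ j"
    using assms by (simp add: \<rho>_def powr_divide powr_power powr_minus_divide powr_realpow[symmetric] powr_powr field_simps)
  finally show ?thesis by simp
qed

lemma riesz_kernel_le_shells:
  fixes x y :: "'a::euclidean_space"
  assumes "\<alpha> \<le> real DIM('a)" "0 < R"
  shows "indicator (ball x R) y * ennreal (dist x y powr (\<alpha> - real DIM('a)))
    \<le> (\<Sum>j. ennreal ((R / 2 ^ Suc j) powr (\<alpha> - real DIM('a))) * indicator (cball x (R / 2 ^ j)) y)"
proof (cases "y \<in> ball x R \<and> y \<noteq> x")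
  case True
  let ?t = "\<lambda>j. (R / 2 ^ Suc j) powr (\<alpha> - real DIM('a))"
  define d where "d = dist x y"
  have d: "0 < d" "d < R" using True by (auto simp: d_def)
  then obtain j where j: "2 ^ j \<le> R / d" "R / d < 2 ^ Suc j"
    using exists_dyadic_scale[of "R / d"] by auto
  have "d powr (\<alpha> - real DIM('a)) \<le> ?t j"
    using assms j(2) d by (intro powr_mono2') (auto simp: field_simps)
  then have "indicator (ball x R) y * ennreal (dist x y powr (\<alpha> - real DIM('a)))
      \<le> ennreal (?t j) * indicator (cball x (R / 2 ^ j)) y"
    using True j(1) d by (simp add: d_def indicator_def dist_commute ennreal_leI field_simps)
  also have "\<dots> \<le> (\<Sum>j. ennreal (?t j) * indicator (cball x (R / 2 ^ j)) y)"
    by (rule ennreal_le_suminf_term)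
  finally show ?thesis .
qed (auto simp: indicator_def)

text \<open>The balls B(x, R/2^j) of the shell bound have measures decaying like 2^(-jn), so the series
  is geometric with ratio 2^(-\<alpha>).\<close>

lemma riesz_kernel_ball_le:
  fixes x :: "'a::euclidean_space"
  assumes \<alpha>: "0 < \<alpha>" "\<alpha> < real DIM('a)" and R: "0 < R"
  shows "(\<integral>\<^sup>+ y. indicator (ball x R) y * ennreal (dist x y powr (\<alpha> - real DIM('a))) \<partial>lborel)
    \<le> ennreal (riesz_ball_const \<alpha> (real DIM('a)) * R powr \<alpha>)"
proof -
  let ?n = "real DIM('a)"
  define t where "t j = (R / 2 ^ Suc j) powr (\<alpha> - ?n)" for j :: nat
  have "(\<integral>\<^sup>+ y. indicator (ball x R) y * ennreal (dist x y powr (\<alpha> - ?n)) \<partial>lborel)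
      \<le> (\<integral>\<^sup>+ y. (\<Sum>j. ennreal (t j) * indicator (cball x (R / 2 ^ j)) y) \<partial>lborel)"
    unfolding t_def using \<alpha> R by (intro nn_integral_mono riesz_kernel_le_shells) auto
  also have "\<dots> = (\<Sum>j. \<integral>\<^sup>+ y. ennreal (t j) * indicator (cball x (R / 2 ^ j)) y \<partial>lborel)"
    by (intro nn_integral_suminf borel_measurable_times_ennreal borel_measurable_indicator) auto
  also have "\<dots> = (\<Sum>j. ennreal (t j) * emeasure lborel (cball x (R / 2 ^ j)))"
    by (intro suminf_cong nn_integral_cmult_indicator) simp
  also have "\<dots> \<le> (\<Sum>j. ennreal (t j * (2 * (R / 2 ^ j)) ^ DIM('a)))"
  proof (intro suminf_le)
    fix j
    have "emeasure lborel (cball x (R / 2 ^ j)) \<le> ennreal ((2 * (R / 2 ^ j)) ^ DIM('a))"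
      by (rule emeasure_cball_le) (use R in simp)
    then show "ennreal (t j) * emeasure lborel (cball x (R / 2 ^ j)) \<le> ennreal (t j * (2 * (R / 2 ^ j)) ^ DIM('a))"
      by (simp add: ennreal_mult' mult_left_mono t_def)
  qed auto
  also have "\<dots> = (\<Sum>j. ennreal (R powr \<alpha> * 2 powr (2 * ?n - \<alpha>) * (2 powr (- \<alpha>)) ^ j))"
    unfolding t_def by (subst dyadic_shell_powr_eq[OF R refl]) (rule refl)
  also have "\<dots> = ennreal (riesz_ball_const \<alpha> ?n * R powr \<alpha>)"
  proof (rule suminf_ennreal_eq)
    have "norm (2 powr (- \<alpha>)) < (1::real)" using \<alpha> by (simp add: powr_minus_divide)
    then show "(\<lambda>j. R powr \<alpha> * 2 powr (2 * ?n - \<alpha>) * (2 powr (- \<alpha>)) ^ j) sums (riesz_ball_const \<alpha> ?n * R powr \<alpha>)"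
      using sums_mult[OF geometric_sums, of "2 powr (- \<alpha>)" "R powr \<alpha> * 2 powr (2 * ?n - \<alpha>)"]
      by (simp add: riesz_ball_const_def field_simps)
  qed simp
  finally show ?thesis .
qed

definition riesz_annulus_const :: "real \<Rightarrow> real \<Rightarrow> real" where
  "riesz_annulus_const \<alpha> n = riesz_ball_const \<alpha> n * 3 powr \<alpha> + 2 powr (2 * n - \<alpha>)"

lemma riesz_annulus_const_pos: "0 < \<alpha> \<Longrightarrow> 0 < riesz_annulus_const \<alpha> n"
  unfolding riesz_annulus_const_def using riesz_ball_const_pos[of \<alpha> n] by (intro add_pos_pos mult_pos_pos) auto

lemma riesz_kernel_near_le:
  fixes x c :: "'a::euclidean_space"
  assumes \<alpha>: "0 < \<alpha>" "\<alpha> < real DIM('a)" and r: "0 < r" and d: "dist x c < 2 * r" and A: "A \<subseteq> ball c r"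
  shows "(\<integral>\<^sup>+ y. indicator A y * ennreal (dist x y powr (\<alpha> - real DIM('a))) \<partial>lborel)
    \<le> ennreal (riesz_annulus_const \<alpha> (real DIM('a)) * r powr \<alpha>)"
proof -
  have "A \<subseteq> ball x (3 * r)"
  proof
    fix y assume "y \<in> A"
    then have "dist c y < r" using A by auto
    then show "y \<in> ball x (3 * r)" using d dist_triangle[of x y c] by simp
  qed
  then have "(\<integral>\<^sup>+ y. indicator A y * ennreal (dist x y powr (\<alpha> - real DIM('a))) \<partial>lborel)
      \<le> (\<integral>\<^sup>+ y. indicator (ball x (3 * r)) y * ennreal (dist x y powr (\<alpha> - real DIM('a))) \<partial>lborel)"
    by (intro nn_integral_mono) (auto simp: indicator_def)
  also have "\<dots> \<le> ennreal (riesz_ball_const \<alpha> (real DIM('a)) * (3 * r) powr \<alpha>)"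
    by (rule riesz_kernel_ball_le) (use \<alpha> r in auto)
  also have "\<dots> \<le> ennreal (riesz_annulus_const \<alpha> (real DIM('a)) * r powr \<alpha>)"
    unfolding riesz_annulus_const_def powr_mult using r by (intro ennreal_leI) (simp add: algebra_simps)
  finally show ?thesis .
qed

lemma riesz_kernel_far_le:
  fixes x c :: "'a::euclidean_space"
  assumes \<alpha>: "\<alpha> < real DIM('a)" and r: "0 < r"
    and d: "2 * r \<le> dist x c" "2 ^ p * r \<le> dist x c" and A: "A \<subseteq> ball c r"
  shows "(\<integral>\<^sup>+ y. indicator A y * ennreal (dist x y powr (\<alpha> - real DIM('a))) \<partial>lborel)
    \<le> ennreal (2 powr (2 * real DIM('a) - \<alpha>) * r powr real DIM('a) * (2 ^ p * r) powr (\<alpha> - real DIM('a)))"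
proof -
  let ?n = "real DIM('a)"
  let ?K = "(2 ^ p * r / 2) powr (\<alpha> - ?n)"
  have kernel: "indicator A y * ennreal (dist x y powr (\<alpha> - ?n)) \<le> ennreal ?K * indicator (ball c r) y" for y
  proof (cases "y \<in> A")
    case True
    then have "dist y c < r" using A by (auto simp: dist_commute)
    then have "2 ^ p * r / 2 \<le> dist x y" using d dist_triangle[of x c y] by (simp add: dist_commute)
    then have "dist x y powr (\<alpha> - ?n) \<le> ?K"
      using \<alpha> r by (intro powr_mono2') auto
    then show ?thesis using True A by (auto simp: indicator_def ennreal_leI)
  qed simp
  have "(\<integral>\<^sup>+ y. indicator A y * ennreal (dist x y powr (\<alpha> - ?n)) \<partial>lborel)
      \<le> (\<integral>\<^sup>+ y. ennreal ?K * indicator (ball c r) y \<partial>lborel)"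
    by (intro nn_integral_mono kernel)
  also have "\<dots> = ennreal ?K * emeasure lborel (ball c r)"
    by (rule nn_integral_cmult_indicator) simp
  also have "\<dots> \<le> ennreal ?K * ennreal ((2 * r) ^ DIM('a))"
  proof (intro mult_left_mono)
    have "emeasure lborel (ball c r) \<le> emeasure lborel (cball c r)"
      by (rule emeasure_mono) auto
    then show "emeasure lborel (ball c r) \<le> ennreal ((2 * r) ^ DIM('a))"
      using emeasure_cball_le[of r c] r by simp
  qed simp
  also have "\<dots> = ennreal (2 powr (2 * ?n - \<alpha>) * r powr ?n * (2 ^ p * r) powr (\<alpha> - ?n))"
    using r by (simp add: ennreal_mult'[symmetric] powr_divide powr_diff powr_mult powr_realpow[symmetric]
        powr_add[symmetric] field_simps)
  finally show ?thesis .
qed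

text \<open>Dilates B(c, 2^(p+1) r) with 2^p r > T + r get weight 0: a point at distance at least
  2^p r from c is then farther than T from all of B(c, r).\<close>

definition annulus_weight :: "real \<Rightarrow> real \<Rightarrow> real \<Rightarrow> real \<Rightarrow> nat \<Rightarrow> real" where
  "annulus_weight \<alpha> n r T p =
    (if 2 ^ p * r \<le> T + r then riesz_annulus_const \<alpha> n * r powr n * (2 ^ p * r) powr (\<alpha> - n) else 0)"

lemma annulus_weight_nonneg: "0 < \<alpha> \<Longrightarrow> 0 \<le> annulus_weight \<alpha> n r T p"
  unfolding annulus_weight_def using riesz_annulus_const_pos[of \<alpha> n] by auto

lemma riesz_kernel_annuli_le:
  fixes x c :: "'a::euclidean_space"
  assumes \<alpha>: "0 < \<alpha>" "\<alpha> < real DIM('a)" and r: "0 < r"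
    and A: "A \<subseteq> ball c r" and AT: "\<And>y. y \<in> A \<Longrightarrow> dist x y \<le> T"
  shows "(\<integral>\<^sup>+ y. indicator A y * ennreal (dist x y powr (\<alpha> - real DIM('a))) \<partial>lborel)
    \<le> (\<Sum>p. ennreal (annulus_weight \<alpha> (real DIM('a)) r T p) * indicator (ball c (2 ^ Suc p * r)) x)"
proof (cases "A = {}")
  case False
  let ?n = "real DIM('a)"
  let ?L = "(\<integral>\<^sup>+ y. indicator A y * ennreal (dist x y powr (\<alpha> - ?n)) \<partial>lborel)"
  let ?S = "(\<Sum>p. ennreal (annulus_weight \<alpha> ?n r T p) * indicator (ball c (2 ^ Suc p * r)) x)"
  obtain y0 where y0: "y0 \<in> A" using False by blast
  have "dist y0 c < r" using y0 A by (auto simp: dist_commute)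
  then have T: "0 \<le> T" "dist x c < T + r"
    using AT[OF y0] dist_triangle[of x c y0] zero_le_dist[of x y0] by linarith+
  show ?thesis
  proof (cases "dist x c < 2 * r")
    case True
    have "?L \<le> ennreal (riesz_annulus_const \<alpha> ?n * r powr \<alpha>)"
      by (rule riesz_kernel_near_le[OF \<alpha> r True A])
    also have "\<dots> = ennreal (annulus_weight \<alpha> ?n r T 0) * indicator (ball c (2 ^ Suc 0 * r)) x"
      using True T r by (simp add: annulus_weight_def dist_commute mult.assoc flip: powr_add)
    also have "\<dots> \<le> ?S"
      by (rule ennreal_le_suminf_term)
    finally show ?thesis .
  next
    case False
    then have "1 \<le> dist x c / r" using r by simp
    then obtain p where p: "2 ^ p \<le> dist x c / r" "dist x c / r < 2 ^ Suc p"
      by (rule exists_dyadic_scale)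
    have p1: "2 ^ p * r \<le> dist x c" and p2: "dist x c < 2 ^ Suc p * r"
      using p r by (simp_all add: field_simps)
    have "?L \<le> ennreal (2 powr (2 * ?n - \<alpha>) * r powr ?n * (2 ^ p * r) powr (\<alpha> - ?n))"
      using False by (intro riesz_kernel_far_le[OF \<alpha>(2) r _ p1 A]) simp
    also have "\<dots> \<le> ennreal (annulus_weight \<alpha> ?n r T p) * indicator (ball c (2 ^ Suc p * r)) x"
      using p1 p2 T riesz_ball_const_pos[OF \<alpha>(1), of ?n]
      by (auto simp: annulus_weight_def riesz_annulus_const_def dist_commute intro!: ennreal_leI mult_right_mono)
    also have "\<dots> \<le> ?S"
      by (rule ennreal_le_suminf_term)
    finally show ?thesis .
  qed
qed simp

section \<open>Covering dilated balls by dyadic cubes\<close>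

definition dyadic_level :: "real \<Rightarrow> real \<Rightarrow> nat" where
  "dyadic_level L \<rho> = nat \<lfloor>log 2 (L / (2 * \<rho>))\<rfloor>"

lemma dyadic_side_level:
  assumes "0 < \<rho>" "2 * \<rho> \<le> L"
  shows "2 * \<rho> \<le> dyadic_side L (dyadic_level L \<rho>)" "dyadic_side L (dyadic_level L \<rho>) < 4 * \<rho>"
proof -
  have "1 \<le> L / (2 * \<rho>)" using assms by simp
  from dyadic_scale_bounds[OF this] assms show
    "2 * \<rho> \<le> dyadic_side L (dyadic_level L \<rho>)" "dyadic_side L (dyadic_level L \<rho>) < 4 * \<rho>"
    unfolding dyadic_level_def dyadic_side_def by (simp_all add: field_simps)
qed

text \<open>A ball of radius \<rho> meets at most 2^n dyadic cubes of side at least 2\<rho>: in each coordinate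
  only the two cells containing c \<bullet> i - \<rho> and its right neighbour can occur.\<close>

definition dyadic_ball_indices :: "real \<Rightarrow> nat \<Rightarrow> 'a::euclidean_space \<Rightarrow> real \<Rightarrow> ('a \<Rightarrow> int) set" where
  "dyadic_ball_indices L k c \<rho> = PiE Basis
    (\<lambda>i. {\<lfloor>(c \<bullet> i - \<rho>) / dyadic_side L k\<rfloor>, \<lfloor>(c \<bullet> i - \<rho>) / dyadic_side L k\<rfloor> + 1})"

lemma finite_dyadic_ball_indices: "finite (dyadic_ball_indices L k c \<rho>)"
  unfolding dyadic_ball_indices_def by (intro finite_PiE) auto

lemma dyadic_ball_indices_subset: "dyadic_ball_indices L k c \<rho> \<subseteq> PiE Basis (\<lambda>_. UNIV)"
  unfolding dyadic_ball_indices_def by (auto simp: PiE_def Pi_def)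

lemma card_dyadic_ball_indices: "card (dyadic_ball_indices L k (c::'a::euclidean_space) \<rho>) = 2 ^ DIM('a)"
  unfolding dyadic_ball_indices_def by (simp add: card_PiE numeral_2_eq_2)

lemma dyadic_index_in_ball_indices:
  assumes L: "0 < L" and side: "2 * \<rho> \<le> dyadic_side L k" and x: "x \<in> ball c \<rho>"
  shows "dyadic_index L k x \<in> dyadic_ball_indices L k c \<rho>"
  unfolding dyadic_ball_indices_def dyadic_index_def
proof (intro restrict_PiE_iff[THEN iffD2] ballI)
  fix i :: 'a assume i: "i \<in> Basis"
  define s where "s = dyadic_side L k"
  have s0: "0 < s" using dyadic_side_pos[OF L] by (simp add: s_def)
  have "\<bar>(x - c) \<bullet> i\<bar> < \<rho>"
    using Basis_le_norm[OF i, of "x - c"] x by (simp add: dist_norm norm_minus_commute)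
  then have xi: "c \<bullet> i - \<rho> < x \<bullet> i" "x \<bullet> i < c \<bullet> i - \<rho> + s"
    using side by (auto simp: inner_diff_left s_def abs_less_iff)
  have "\<lfloor>(c \<bullet> i - \<rho>) / s\<rfloor> \<le> \<lfloor>(x \<bullet> i) / s\<rfloor>"
    by (intro floor_mono divide_right_mono) (use xi s0 in auto)
  moreover have "\<lfloor>(x \<bullet> i) / s\<rfloor> \<le> \<lfloor>(c \<bullet> i - \<rho>) / s + 1\<rfloor>"
    by (intro floor_mono) (use xi s0 in \<open>simp add: field_simps\<close>)
  ultimately show "\<lfloor>(x \<bullet> i) / dyadic_side L k\<rfloor>
      \<in> {\<lfloor>(c \<bullet> i - \<rho>) / dyadic_side L k\<rfloor>, \<lfloor>(c \<bullet> i - \<rho>) / dyadic_side L k\<rfloor> + 1}"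
    unfolding s_def by auto
qed

definition annulus_level :: "real \<Rightarrow> real \<Rightarrow> nat \<Rightarrow> nat" where
  "annulus_level L r p = dyadic_level L (2 ^ Suc p * r)"

definition annulus_indices :: "real \<Rightarrow> 'a::euclidean_space \<Rightarrow> real \<Rightarrow> nat \<Rightarrow> ('a \<Rightarrow> int) set" where
  "annulus_indices L c r p = dyadic_ball_indices L (annulus_level L r p) c (2 ^ Suc p * r)"

lemma sum_dyadic_powr_le:
  assumes \<alpha>: "0 < \<alpha>" and r: "0 < r" "r \<le> X"
  shows "(\<Sum>p. ennreal (if 2 ^ p * r \<le> X then (2 ^ p * r) powr \<alpha> else 0))
    \<le> ennreal (2 powr \<alpha> / (2 powr \<alpha> - 1) * X powr \<alpha>)"
proof -
  define q :: real where "q = 2 powr \<alpha>"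
  have q: "1 < q" using \<alpha> by (simp add: q_def)
  have "1 \<le> X / r" using r by simp
  then obtain P where P: "2 ^ P \<le> X / r" "X / r < 2 ^ Suc P"
    by (rule exists_dyadic_scale)
  have scale: "(2 ^ p * r) powr \<alpha> = r powr \<alpha> * q ^ p" for p
    using r by (simp add: powr_mult q_def powr_power powr_realpow[symmetric] powr_powr mult.commute)
  have "p < Suc P" if "2 ^ p * r \<le> X" for p
  proof -
    have "X < 2 ^ Suc P * r" using P(2) r by (simp add: field_simps)
    then have "2 ^ p * r < 2 ^ Suc P * r" using that by linarith
    then have "(2::real) ^ p < 2 ^ Suc P" using r by (simp only: mult_less_cancel_right)
    then show ?thesis by (metis power_strict_increasing_iff one_less_numeral_iff semiring_norm(76))
  qed
  then have "(\<Sum>p. ennreal (if 2 ^ p * r \<le> X then (2 ^ p * r) powr \<alpha> else 0))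
      = (\<Sum>p<Suc P. ennreal (if 2 ^ p * r \<le> X then (2 ^ p * r) powr \<alpha> else 0))"
    by (intro suminf_finite) auto
  also have "\<dots> \<le> (\<Sum>p<Suc P. ennreal (r powr \<alpha> * q ^ p))"
    by (intro sum_mono ennreal_leI) (use q in \<open>auto simp: scale\<close>)
  also have "\<dots> = ennreal (r powr \<alpha> * (\<Sum>p<Suc P. q ^ p))"
    using q by (subst sum_ennreal) (auto simp: sum_distrib_left simp del: sum.lessThan_Suc)
  also have "\<dots> \<le> ennreal (q / (q - 1) * X powr \<alpha>)"
  proof (rule ennreal_leI)
    have "(\<Sum>p<Suc P. q ^ p) = (q ^ Suc P - 1) / (q - 1)"
      using q by (intro geometric_sum) simp
    then have "r powr \<alpha> * (\<Sum>p<Suc P. q ^ p) = r powr \<alpha> * ((q ^ Suc P - 1) / (q - 1))"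
      by simp
    also have "\<dots> \<le> r powr \<alpha> * (q ^ Suc P / (q - 1))"
      using q by (intro mult_left_mono divide_right_mono) auto
    also have "\<dots> = q / (q - 1) * (2 ^ P * r) powr \<alpha>"
      by (simp add: scale)
    also have "\<dots> \<le> q / (q - 1) * X powr \<alpha>"
      using P(1) r \<alpha> q by (intro mult_left_mono powr_mono2) (auto simp: field_simps)
    finally show "r powr \<alpha> * (\<Sum>p<Suc P. q ^ p) \<le> q / (q - 1) * X powr \<alpha>" .
  qed
  finally show ?thesis by (simp add: q_def)
qed

definition annulus_cost_const :: "real \<Rightarrow> real \<Rightarrow> real \<Rightarrow> real" where
  "annulus_cost_const \<alpha> \<beta> n = riesz_annulus_const \<alpha> n * 8 powr \<beta> * (2 powr \<alpha> / (2 powr \<alpha> - 1))"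

lemma annulus_cost_const_pos: "0 < \<alpha> \<Longrightarrow> 0 < annulus_cost_const \<alpha> \<beta> n"
  unfolding annulus_cost_const_def using riesz_annulus_const_pos[of \<alpha> n]
  by (intro mult_pos_pos divide_pos_pos) auto

text \<open>Here \<beta> \<le> n makes r^n (2^p r)^(\<beta> - n) \<le> r^\<beta>, so only the growing factor (2^p r)^\<alpha>
  remains, and it is summed up to the scale T + r.\<close>

lemma annulus_weight_sum_le:
  assumes \<alpha>: "0 < \<alpha>" and \<beta>: "\<beta> \<le> n" and r: "0 < r" and T: "0 \<le> T"
  shows "(\<Sum>p. ennreal (annulus_weight \<alpha> n r T p * (8 * (2 ^ p * r)) powr \<beta>))
     \<le> ennreal (annulus_cost_const \<alpha> \<beta> n * r powr \<beta> * (T + r) powr \<alpha>)"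
proof -
  define K where "K = riesz_annulus_const \<alpha> n * 8 powr \<beta> * r powr \<beta>"
  have K: "0 \<le> K" using riesz_annulus_const_pos[OF \<alpha>, of n] by (simp add: K_def)
  have single: "annulus_weight \<alpha> n r T p * (8 * (2 ^ p * r)) powr \<beta>
      \<le> K * (if 2 ^ p * r \<le> T + r then (2 ^ p * r) powr \<alpha> else 0)" for p
  proof (cases "2 ^ p * r \<le> T + r")
    case True
    have "annulus_weight \<alpha> n r T p * (8 * (2 ^ p * r)) powr \<beta>
        = riesz_annulus_const \<alpha> n * 8 powr \<beta> * (r powr n * (2 ^ p * r) powr (\<beta> - n)) * (2 ^ p * r) powr \<alpha>"
      using True r by (simp add: annulus_weight_def powr_mult powr_diff powr_add field_simps)
    also have "\<dots> \<le> riesz_annulus_const \<alpha> n * 8 powr \<beta> * (r powr n * r powr (\<beta> - n)) * (2 ^ p * r) powr \<alpha>"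
    proof -
      have "(2 ^ p * r) powr (\<beta> - n) \<le> r powr (\<beta> - n)"
        using \<beta> r by (intro powr_mono2') auto
      then show ?thesis using riesz_annulus_const_pos[OF \<alpha>, of n]
        by (intro mult_right_mono mult_left_mono) auto
    qed
    also have "r powr n * r powr (\<beta> - n) = r powr \<beta>" by (simp flip: powr_add)
    finally show ?thesis using True by (simp add: K_def mult_ac)
  qed (simp add: annulus_weight_def)
  have "(\<Sum>p. ennreal (annulus_weight \<alpha> n r T p * (8 * (2 ^ p * r)) powr \<beta>))
      \<le> (\<Sum>p. ennreal K * ennreal (if 2 ^ p * r \<le> T + r then (2 ^ p * r) powr \<alpha> else 0))"
  proof (intro suminf_le)
    fix p
    show "ennreal (annulus_weight \<alpha> n r T p * (8 * (2 ^ p * r)) powr \<beta>)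
        \<le> ennreal K * ennreal (if 2 ^ p * r \<le> T + r then (2 ^ p * r) powr \<alpha> else 0)"
      by (subst ennreal_mult'[symmetric, OF K]) (rule ennreal_leI[OF single])
  qed auto
  also have "\<dots> = ennreal K * (\<Sum>p. ennreal (if 2 ^ p * r \<le> T + r then (2 ^ p * r) powr \<alpha> else 0))"
    by (rule ennreal_suminf_cmult)
  also have "\<dots> \<le> ennreal K * ennreal (2 powr \<alpha> / (2 powr \<alpha> - 1) * (T + r) powr \<alpha>)"
    using T by (intro mult_left_mono sum_dyadic_powr_le \<alpha> r) auto
  also have "\<dots> = ennreal (annulus_cost_const \<alpha> \<beta> n * r powr \<beta> * (T + r) powr \<alpha>)"
    using K by (simp add: K_def annulus_cost_const_def mult_ac flip: ennreal_mult')
  finally show ?thesis .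
qed

lemma riesz_kernel_le_annulus_cubes:
  fixes x c :: "'a::euclidean_space"
  assumes \<alpha>: "0 < \<alpha>" "\<alpha> < real DIM('a)" and L: "0 < L" and r: "0 \<le> r"
    and LT: "4 * (T + r) \<le> L" and A: "A \<subseteq> ball c r" and AT: "\<And>y. y \<in> A \<Longrightarrow> dist x y \<le> T"
  shows "(\<integral>\<^sup>+ y. indicator A y * ennreal (dist x y powr (\<alpha> - real DIM('a))) \<partial>lborel)
    \<le> (\<Sum>p. ennreal (annulus_weight \<alpha> (real DIM('a)) r T p) *
        indicator (annulus_indices L c r p) (dyadic_index L (annulus_level L r p) x))"
proof (cases "r = 0")
  case True
  then have "A = {}" using A by auto
  then show ?thesis by simp
next
  case False
  then have r0: "0 < r" using r by simp
  have "(\<integral>\<^sup>+ y. indicator A y * ennreal (dist x y powr (\<alpha> - real DIM('a))) \<partial>lborel)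
      \<le> (\<Sum>p. ennreal (annulus_weight \<alpha> (real DIM('a)) r T p) * indicator (ball c (2 ^ Suc p * r)) x)"
    by (rule riesz_kernel_annuli_le[OF \<alpha> r0 A AT])
  also have "\<dots> \<le> (\<Sum>p. ennreal (annulus_weight \<alpha> (real DIM('a)) r T p) *
        indicator (annulus_indices L c r p) (dyadic_index L (annulus_level L r p) x))"
  proof (intro suminf_le)
    fix p
    show "ennreal (annulus_weight \<alpha> (real DIM('a)) r T p) * indicator (ball c (2 ^ Suc p * r)) x
      \<le> ennreal (annulus_weight \<alpha> (real DIM('a)) r T p) *
        indicator (annulus_indices L c r p) (dyadic_index L (annulus_level L r p) x)"
    proof (cases "2 ^ p * r \<le> T + r \<and> x \<in> ball c (2 ^ Suc p * r)")
      case True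
      define \<rho> where "\<rho> = 2 ^ Suc p * r"
      have "0 < \<rho>" "2 * \<rho> \<le> L" using r0 True LT by (auto simp: \<rho>_def)
      then have "2 * \<rho> \<le> dyadic_side L (dyadic_level L \<rho>)" by (rule dyadic_side_level(1))
      then have "dyadic_index L (dyadic_level L \<rho>) x \<in> dyadic_ball_indices L (dyadic_level L \<rho>) c \<rho>"
        using True by (intro dyadic_index_in_ball_indices[OF L]) (auto simp: \<rho>_def)
      then show ?thesis by (simp add: annulus_indices_def annulus_level_def \<rho>_def indicator_def)
    qed (auto simp: annulus_weight_def)
  qed auto
  finally show ?thesis .
qed

lemma annulus_cubes_cost_le:
  fixes c :: "'a::euclidean_space"
  assumes \<alpha>: "0 < \<alpha>" and \<beta>: "0 < \<beta>" "\<beta> \<le> real DIM('a)" and L: "0 < L" and r: "0 \<le> r" and T: "0 \<le> T"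
    and LT: "4 * (T + r) \<le> L"
  shows "(\<Sum>p. ennreal (annulus_weight \<alpha> (real DIM('a)) r T p) * of_nat (card (annulus_indices L c r p))
            * ennreal (dyadic_side L (annulus_level L r p) powr \<beta>))
     \<le> ennreal (2 ^ DIM('a) * annulus_cost_const \<alpha> \<beta> (real DIM('a)) * r powr \<beta> * (T + r) powr \<alpha>)"
proof (cases "r = 0")
  case True
  have "annulus_weight \<alpha> (real DIM('a)) 0 T p = 0" for p
    by (simp add: annulus_weight_def)
  then show ?thesis using True by simp
next
  case False
  then have r0: "0 < r" using r by simp
  let ?n = "real DIM('a)"
  let ?w = "annulus_weight \<alpha> ?n r T"
  have "(\<Sum>p. ennreal (?w p) * of_nat (card (annulus_indices L c r p))
        * ennreal (dyadic_side L (annulus_level L r p) powr \<beta>))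
      \<le> (\<Sum>p. ennreal (2 ^ DIM('a)) * ennreal (?w p * (8 * (2 ^ p * r)) powr \<beta>))"
  proof (intro suminf_le)
    fix p
    have "ennreal (?w p) * ennreal (dyadic_side L (annulus_level L r p) powr \<beta>)
        \<le> ennreal (?w p * (8 * (2 ^ p * r)) powr \<beta>)"
    proof (cases "2 ^ p * r \<le> T + r")
      case True
      define \<rho> where "\<rho> = 2 ^ Suc p * r"
      have "0 < \<rho>" "2 * \<rho> \<le> L" using r0 True LT by (auto simp: \<rho>_def)
      then have "dyadic_side L (dyadic_level L \<rho>) < 4 * \<rho>" by (rule dyadic_side_level(2))
      then have "dyadic_side L (annulus_level L r p) powr \<beta> \<le> (8 * (2 ^ p * r)) powr \<beta>"
        using less_imp_le[OF dyadic_side_pos[OF L]] \<beta> by (intro powr_mono2) (auto simp: \<rho>_def annulus_level_def)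
      then show ?thesis
        using annulus_weight_nonneg[OF \<alpha>] by (simp add: mult_left_mono ennreal_leI flip: ennreal_mult')
    qed (simp add: annulus_weight_def)
    then show "ennreal (?w p) * of_nat (card (annulus_indices L c r p))
        * ennreal (dyadic_side L (annulus_level L r p) powr \<beta>)
      \<le> ennreal (2 ^ DIM('a)) * ennreal (?w p * (8 * (2 ^ p * r)) powr \<beta>)"
      by (simp add: annulus_indices_def card_dyadic_ball_indices mult_ac mult_left_mono flip: ennreal_power)
  qed auto
  also have "\<dots> = ennreal (2 ^ DIM('a)) * (\<Sum>p. ennreal (?w p * (8 * (2 ^ p * r)) powr \<beta>))"
    by (rule ennreal_suminf_cmult)
  also have "\<dots> \<le> ennreal (2 ^ DIM('a)) * ennreal (annulus_cost_const \<alpha> \<beta> ?n * r powr \<beta> * (T + r) powr \<alpha>)"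
    by (intro mult_left_mono annulus_weight_sum_le \<alpha> \<beta> r0 T) auto
  also have "\<dots> = ennreal (2 ^ DIM('a) * annulus_cost_const \<alpha> \<beta> ?n * r powr \<beta> * (T + r) powr \<alpha>)"
    by (simp add: mult.assoc flip: ennreal_mult')
  finally show ?thesis .
qed

section \<open>Level-set decomposition and the main estimate\<close>

definition dyadic_height :: "nat \<Rightarrow> real" where
  "dyadic_height m = 2 powr real_of_int (int_decode m)"

lemma dyadic_height_pos [simp]: "0 < dyadic_height m"
  by (simp add: dyadic_height_def)

lemma int_decode_eq_ceiling_log:
  assumes "dyadic_height m / 2 < s" "s \<le> dyadic_height m"
  shows "int_decode m = \<lceil>log 2 s\<rceil>"
proof -
  have s: "0 < s" using assms(1) dyadic_height_pos[of m] by linarith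
  have "dyadic_height m / 2 = 2 powr (real_of_int (int_decode m) - 1)"
    by (simp add: dyadic_height_def powr_diff)
  then have "real_of_int (int_decode m) - 1 < log 2 s" "log 2 s \<le> real_of_int (int_decode m)"
    using assms s by (simp_all add: less_log_iff log_le_iff dyadic_height_def)
  then show ?thesis by (intro ceiling_unique[symmetric]) simp_all
qed

lemma exists_dyadic_height:
  assumes "0 < t"
  obtains m where "dyadic_height m < t" "t \<le> 2 * dyadic_height m"
proof -
  define K where "K = \<lceil>log 2 t\<rceil> - 1"
  have "real_of_int K < log 2 t" "log 2 t \<le> real_of_int K + 1"
    unfolding K_def by linarith+
  then have "2 powr real_of_int K < t" "t \<le> 2 powr (real_of_int K + 1)"
    using assms by (simp_all add: less_log_iff log_le_iff)
  then show ?thesis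
    using that[of "int_encode K"] by (simp add: dyadic_height_def powr_add)
qed

lemma suminf_dyadic_height_le_integral:
  fixes \<phi> :: "real \<Rightarrow> ennreal"
  assumes anti: "\<And>s s'. 0 < s \<Longrightarrow> s \<le> s' \<Longrightarrow> \<phi> s' \<le> \<phi> s"
  shows "(\<Sum>m. ennreal (dyadic_height m) * \<phi> (dyadic_height m))
    \<le> 2 * (\<integral>\<^sup>+ s. \<phi> s * indicator {0..} s \<partial>lborel)"
proof -
  define I where "I m = {dyadic_height m / 2 <.. dyadic_height m}" for m
  have layers: "(\<Sum>m. \<phi> (dyadic_height m) * indicator (I m) s) \<le> \<phi> s * indicator {0..} s" for s
  proof (cases "\<exists>m. s \<in> I m")
    case True
    then obtain m where m: "s \<in> I m" by blast
    have "m' = m" if "s \<in> I m'" for m'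
    proof -
      have "int_decode m' = int_decode m"
        using int_decode_eq_ceiling_log[of m' s] int_decode_eq_ceiling_log[of m s] that m
        by (simp add: I_def)
      then show ?thesis by (metis int_decode_inverse)
    qed
    then have "(\<Sum>m'. \<phi> (dyadic_height m') * indicator (I m') s)
        = (\<Sum>m'\<in>{m}. \<phi> (dyadic_height m') * indicator (I m') s)"
      by (intro suminf_finite) (auto simp: indicator_def)
    moreover have "0 < s" "s \<le> dyadic_height m"
      using m dyadic_height_pos[of m] by (auto simp: I_def)
    ultimately show ?thesis using m by (simp add: anti)
  qed (simp add: indicator_def)
  have "ennreal (dyadic_height m) * \<phi> (dyadic_height m) = 2 * (\<phi> (dyadic_height m) * emeasure lborel (I m))" for m
  proof -
    have "emeasure lborel (I m) = ennreal (dyadic_height m / 2)"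
      by (simp add: I_def)
    moreover have "ennreal (dyadic_height m) = 2 * ennreal (dyadic_height m / 2)"
      using ennreal_mult[of 2 "dyadic_height m / 2"] less_imp_le[OF dyadic_height_pos[of m]] by simp
    ultimately show ?thesis by (simp add: mult_ac)
  qed
  then have "(\<Sum>m. ennreal (dyadic_height m) * \<phi> (dyadic_height m))
      = 2 * (\<Sum>m. \<phi> (dyadic_height m) * emeasure lborel (I m))"
    by (simp add: ennreal_suminf_cmult)
  also have "(\<Sum>m. \<phi> (dyadic_height m) * emeasure lborel (I m))
      = (\<Sum>m. \<integral>\<^sup>+ s. \<phi> (dyadic_height m) * indicator (I m) s \<partial>lborel)"
    by (intro suminf_cong nn_integral_cmult_indicator[symmetric]) (simp add: I_def)
  also have "\<dots> = (\<integral>\<^sup>+ s. (\<Sum>m. \<phi> (dyadic_height m) * indicator (I m) s) \<partial>lborel)"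
    by (rule nn_integral_suminf[symmetric]) (simp add: I_def)
  also have "\<dots> \<le> (\<integral>\<^sup>+ s. \<phi> s * indicator {0..} s \<partial>lborel)"
    by (intro nn_integral_mono layers)
  finally show ?thesis by (simp add: mult_left_mono)
qed

lemma abs_le_level_cover_sum:
  fixes f :: "'a::euclidean_space \<Rightarrow> real"
  assumes supp: "{x. f x \<noteq> 0} \<subseteq> Q"
    and cov: "\<And>m. {x\<in>Q. \<bar>f x\<bar> > dyadic_height m} \<subseteq> (\<Union>i. ball (c m i) (r m i))"
  shows "ennreal \<bar>f y\<bar> \<le> (\<Sum>m. \<Sum>i. ennreal (2 * dyadic_height m) * indicator (ball (c m i) (r m i) \<inter> Q) y)"
proof (cases "f y = 0")
  case False
  then have y: "y \<in> Q" using supp by blast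
  obtain m where m: "dyadic_height m < \<bar>f y\<bar>" "\<bar>f y\<bar> \<le> 2 * dyadic_height m"
    using exists_dyadic_height[of "\<bar>f y\<bar>"] False by auto
  then obtain i where i: "y \<in> ball (c m i) (r m i)" using cov[of m] y by blast
  have "ennreal \<bar>f y\<bar> \<le> ennreal (2 * dyadic_height m) * indicator (ball (c m i) (r m i) \<inter> Q) y"
    using m i y by (simp add: ennreal_leI)
  also have "\<dots> \<le> (\<Sum>i. ennreal (2 * dyadic_height m) * indicator (ball (c m i) (r m i) \<inter> Q) y)"
    by (rule ennreal_le_suminf_term)
  also have "\<dots> \<le> (\<Sum>m. \<Sum>i. ennreal (2 * dyadic_height m) * indicator (ball (c m i) (r m i) \<inter> Q) y)"
    by (rule ennreal_le_suminf_term)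
  finally show ?thesis .
qed simp

text \<open>No measurability of f is needed: the Bochner integral of a non-integrable function is 0.\<close>

lemma abs_riesz_le_nn_integral:
  fixes f :: "'a::euclidean_space \<Rightarrow> real"
  shows "ennreal \<bar>riesz \<alpha> f x\<bar> \<le> (\<integral>\<^sup>+ y. ennreal \<bar>f y\<bar> * ennreal (dist x y powr (\<alpha> - real DIM('a))) \<partial>lborel)"
proof (cases "integrable lebesgue (\<lambda>y. f y * dist x y powr (\<alpha> - real DIM('a)))")
  case True
  have "ennreal \<bar>riesz \<alpha> f x\<bar> \<le> (\<integral>\<^sup>+ y. norm (f y * dist x y powr (\<alpha> - real DIM('a))) \<partial>lebesgue)"
    unfolding riesz_def using integral_norm_bound_ennreal[OF True] by simp
  also have "\<dots> = (\<integral>\<^sup>+ y. ennreal \<bar>f y\<bar> * ennreal (dist x y powr (\<alpha> - real DIM('a))) \<partial>lborel)"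
    by (simp add: nn_integral_completion abs_mult ennreal_mult)
  finally show ?thesis .
next
  case False
  then show ?thesis by (simp add: riesz_def not_integrable_integral_eq)
qed

lemma suminf_prod_decode3:
  fixes F :: "nat \<Rightarrow> nat \<Rightarrow> nat \<Rightarrow> ennreal"
  shows "(\<Sum>j. F (fst (prod_decode j)) (fst (prod_decode (snd (prod_decode j)))) (snd (prod_decode (snd (prod_decode j)))))
    = (\<Sum>m. \<Sum>i. \<Sum>p. F m i p)"
proof -
  have inner: "(\<Sum>n. F m (fst (prod_decode n)) (snd (prod_decode n))) = (\<Sum>i. \<Sum>p. F m i p)" for m
    using suminf_ennreal_2dimen[where f = "\<lambda>ip. F m (fst ip) (snd ip)" and g = "\<lambda>i. \<Sum>p. F m i p"] by simp
  show ?thesis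
    using suminf_ennreal_2dimen[where f = "\<lambda>mn. F (fst mn) (fst (prod_decode (snd mn))) (snd (prod_decode (snd mn)))"
        and g = "\<lambda>m. \<Sum>i. \<Sum>p. F m i p"] inner by simp
qed

lemma cube_subset_double: "0 < l \<Longrightarrow> cube x0 l \<subseteq> cube x0 (2 * l)"
  by (auto simp: cube_def)

lemma double_cube_subset_ball:
  fixes x0 :: "'a::euclidean_space"
  assumes "0 < l"
  shows "cube x0 (2 * l) \<subseteq> ball x0 (real DIM('a) * l)"
proof
  fix x assume "x \<in> cube x0 (2 * l)"
  then have "norm (x - x0) < real DIM('a) * l"
    by (intro norm_lt_of_coordinates_lt) (simp add: cube_def)
  then show "x \<in> ball x0 (real DIM('a) * l)" by (simp add: dist_norm norm_minus_commute)
qed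

lemma open_cube: "open (cube (x0::'a::euclidean_space) l)"
proof -
  have "cube x0 l = (\<Inter>i\<in>Basis. {x. \<bar>(x - x0) \<bullet> i\<bar> < l / 2})" by (auto simp: cube_def)
  also have "open \<dots>"
    by (intro open_INT finite_Basis ballI open_Collect_less continuous_intros)
  finally show ?thesis .
qed

lemma nn_integral_suminf2_indicator_mult:
  fixes a :: "nat \<Rightarrow> ennreal"
  assumes [measurable]: "\<And>m i. A m i \<in> sets M" "K \<in> borel_measurable M"
  shows "(\<integral>\<^sup>+ y. (\<Sum>m. \<Sum>i. a m * indicator (A m i) y) * K y \<partial>M)
    = (\<Sum>m. \<Sum>i. a m * \<integral>\<^sup>+ y. indicator (A m i) y * K y \<partial>M)"
proof -
  have integrand: "(\<lambda>y. indicator (A m i) y * K y) \<in> borel_measurable M" for m i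
    by measurable
  have "(\<integral>\<^sup>+ y. (\<Sum>m. \<Sum>i. a m * indicator (A m i) y) * K y \<partial>M)
      = (\<integral>\<^sup>+ y. (\<Sum>m. \<Sum>i. a m * (indicator (A m i) y * K y)) \<partial>M)"
    by (simp add: ennreal_suminf_multc[symmetric] mult.assoc del: ennreal_suminf_multc)
  also have "\<dots> = (\<Sum>m. \<integral>\<^sup>+ y. (\<Sum>i. a m * (indicator (A m i) y * K y)) \<partial>M)"
    using integrand by (intro nn_integral_suminf borel_measurable_suminf borel_measurable_times_ennreal) auto
  also have "\<dots> = (\<Sum>m. \<Sum>i. \<integral>\<^sup>+ y. a m * (indicator (A m i) y * K y) \<partial>M)"
    using integrand by (intro suminf_cong nn_integral_suminf borel_measurable_times_ennreal) auto
  also have "\<dots> = (\<Sum>m. \<Sum>i. a m * \<integral>\<^sup>+ y. indicator (A m i) y * K y \<partial>M)"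
    using integrand by (intro suminf_cong nn_integral_cmult)
  finally show ?thesis .
qed

text \<open>Where the constants come from: 2Q lies in B(x0, n l), so every point of Q is within
  T = 2 n l of every piece, and the radii are at most n l, so 4 (T + r) \<le> 12 n l = L.\<close>

lemma abs_riesz_le_annulus_sum:
  fixes x0 x :: "'a::euclidean_space" and f :: "'a \<Rightarrow> real"
  assumes \<alpha>: "0 < \<alpha>" "\<alpha> < real DIM('a)" and l: "0 < l"
    and supp: "{x. f x \<noteq> 0} \<subseteq> cube x0 (2 * l)"
    and cov: "\<And>m. {x\<in>cube x0 (2 * l). \<bar>f x\<bar> > dyadic_height m} \<subseteq> (\<Union>i. ball (c m i) (r m i))"
    and r: "\<And>m i. 0 \<le> r m i" "\<And>m i. r m i \<le> real DIM('a) * l"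
    and x: "x \<in> cube x0 l"
  shows "ennreal \<bar>riesz \<alpha> f x\<bar> \<le> (\<Sum>m. \<Sum>i. \<Sum>p. ennreal (2 * dyadic_height m) *
      ennreal (annulus_weight \<alpha> (real DIM('a)) (r m i) (2 * real DIM('a) * l) p) *
      indicator (annulus_indices (12 * real DIM('a) * l) (c m i) (r m i) p)
        (dyadic_index (12 * real DIM('a) * l) (annulus_level (12 * real DIM('a) * l) (r m i) p) x))"
proof -
  let ?n = "real DIM('a)"
  let ?Q = "cube x0 (2 * l)"
  define L where "L = 12 * ?n * l"
  define T where "T = 2 * ?n * l"
  define a where "a m = ennreal (2 * dyadic_height m)" for m
  define K where "K y = ennreal (dist x y powr (\<alpha> - ?n))" for y
  define A where "A m i = ball (c m i) (r m i) \<inter> ?Q" for m i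
  have A_borel [measurable]: "A m i \<in> sets borel" for m i
    unfolding A_def using open_cube by (intro sets.Int borel_open) auto
  have "ennreal \<bar>riesz \<alpha> f x\<bar> \<le> (\<integral>\<^sup>+ y. ennreal \<bar>f y\<bar> * K y \<partial>lborel)"
    unfolding K_def by (rule abs_riesz_le_nn_integral)
  also have "\<dots> \<le> (\<integral>\<^sup>+ y. (\<Sum>m. \<Sum>i. a m * indicator (A m i) y) * K y \<partial>lborel)"
    unfolding a_def A_def by (intro nn_integral_mono mult_right_mono abs_le_level_cover_sum[OF supp cov]) simp
  also have "\<dots> = (\<Sum>m. \<Sum>i. a m * \<integral>\<^sup>+ y. indicator (A m i) y * K y \<partial>lborel)"
    unfolding K_def by (rule nn_integral_suminf2_indicator_mult) auto
  also have "\<dots> \<le> (\<Sum>m. \<Sum>i. a m * (\<Sum>p. ennreal (annulus_weight \<alpha> ?n (r m i) T p) *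
      indicator (annulus_indices L (c m i) (r m i) p) (dyadic_index L (annulus_level L (r m i) p) x)))"
  proof (intro suminf_le mult_left_mono)
    fix m i
    have "dist x y \<le> T" if "y \<in> A m i" for y
    proof -
      have "x \<in> ?Q" using x cube_subset_double[OF l] by blast
      then have "dist x0 y < ?n * l" "dist x0 x < ?n * l"
        using that double_cube_subset_ball[OF l, of x0] by (auto simp: A_def)
      then show ?thesis using dist_triangle[of x y x0] by (simp add: T_def dist_commute)
    qed
    moreover have "4 * (T + r m i) \<le> L" using r(2)[of m i] by (simp add: T_def L_def mult.commute)
    ultimately show "(\<integral>\<^sup>+ y. indicator (A m i) y * K y \<partial>lborel) \<le>
      (\<Sum>p. ennreal (annulus_weight \<alpha> ?n (r m i) T p) *
        indicator (annulus_indices L (c m i) (r m i) p) (dyadic_index L (annulus_level L (r m i) p) x))"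
      unfolding K_def using \<alpha> l r(1)
      by (intro riesz_kernel_le_annulus_cubes) (auto simp: A_def L_def)
  qed auto
  also have "\<dots> = (\<Sum>m. \<Sum>i. \<Sum>p. a m * ennreal (annulus_weight \<alpha> ?n (r m i) T p) *
      indicator (annulus_indices L (c m i) (r m i) p) (dyadic_index L (annulus_level L (r m i) p) x))"
    by (simp add: ennreal_suminf_cmult[symmetric] mult.assoc del: ennreal_suminf_cmult)
  finally show ?thesis by (simp add: a_def L_def T_def)
qed

definition riesz_cube_const :: "real \<Rightarrow> real \<Rightarrow> nat \<Rightarrow> real" where
  "riesz_cube_const \<alpha> \<beta> n = 2 * real n powr \<beta> * 2 ^ n * annulus_cost_const \<alpha> \<beta> (real n) * (3 * real n) powr \<alpha>"

lemma riesz_cube_const_pos: "0 < \<alpha> \<Longrightarrow> 0 < n \<Longrightarrow> 0 < riesz_cube_const \<alpha> \<beta> n"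
  unfolding riesz_cube_const_def using annulus_cost_const_pos[of \<alpha> \<beta> "real n"] by simp

lemma annulus_cubes_content_le:
  fixes c :: "'a::euclidean_space"
  assumes \<alpha>: "0 < \<alpha>" and \<beta>: "0 < \<beta>" "\<beta> \<le> real DIM('a)" and l: "0 < l" and h: "0 \<le> h"
    and r: "0 \<le> r" "r \<le> real DIM('a) * l"
  shows "ennreal (omega \<beta> * real DIM('a) powr \<beta>) *
      (\<Sum>p. ennreal (2 * h) * ennreal (annulus_weight \<alpha> (real DIM('a)) r (2 * real DIM('a) * l) p) *
        of_nat (card (annulus_indices (12 * real DIM('a) * l) c r p)) *
        ennreal (dyadic_side (12 * real DIM('a) * l) (annulus_level (12 * real DIM('a) * l) r p) powr \<beta>))
    \<le> ennreal (riesz_cube_const \<alpha> \<beta> DIM('a) * l powr \<alpha>) * (ennreal h * ennreal (omega \<beta> * r powr \<beta>))"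
proof -
  let ?n = "real DIM('a)"
  define L where "L = 12 * ?n * l"
  define T where "T = 2 * ?n * l"
  define E where "E = 2 ^ DIM('a) * annulus_cost_const \<alpha> \<beta> ?n"
  have E: "0 \<le> E"
    unfolding E_def using annulus_cost_const_pos[OF \<alpha>, of \<beta> ?n] by (intro mult_nonneg_nonneg) auto
  have \<omega>: "0 \<le> omega \<beta>" using omega_pos[OF \<beta>(1)] by simp
  have "(\<Sum>p. ennreal (2 * h) * ennreal (annulus_weight \<alpha> ?n r T p) * of_nat (card (annulus_indices L c r p))
        * ennreal (dyadic_side L (annulus_level L r p) powr \<beta>))
      = ennreal (2 * h) * (\<Sum>p. ennreal (annulus_weight \<alpha> ?n r T p) * of_nat (card (annulus_indices L c r p))
        * ennreal (dyadic_side L (annulus_level L r p) powr \<beta>))"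
    by (simp add: ennreal_suminf_cmult[symmetric] mult.assoc del: ennreal_suminf_cmult)
  also have "\<dots> \<le> ennreal (2 * h) * ennreal (E * r powr \<beta> * (T + r) powr \<alpha>)"
    unfolding E_def using r l
    by (intro mult_left_mono annulus_cubes_cost_le[OF \<alpha> \<beta>]) (auto simp: L_def T_def mult.commute)
  also have "\<dots> \<le> ennreal (2 * h) * ennreal (E * r powr \<beta> * ((3 * ?n) powr \<alpha> * l powr \<alpha>))"
  proof -
    have "(T + r) powr \<alpha> \<le> (3 * ?n * l) powr \<alpha>"
      using r l \<alpha> by (intro powr_mono2) (auto simp: T_def mult.commute)
    then have "E * r powr \<beta> * (T + r) powr \<alpha> \<le> E * r powr \<beta> * ((3 * ?n) powr \<alpha> * l powr \<alpha>)"
      using E by (intro mult_left_mono) (auto simp: powr_mult)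
    then show ?thesis by (rule mult_left_mono[OF ennreal_leI]) simp
  qed
  finally have "ennreal (omega \<beta> * ?n powr \<beta>) * (\<Sum>p. ennreal (2 * h) * ennreal (annulus_weight \<alpha> ?n r T p)
        * of_nat (card (annulus_indices L c r p)) * ennreal (dyadic_side L (annulus_level L r p) powr \<beta>))
      \<le> ennreal (omega \<beta> * ?n powr \<beta>) * (ennreal (2 * h) * ennreal (E * r powr \<beta> * ((3 * ?n) powr \<alpha> * l powr \<alpha>)))"
    by (rule mult_left_mono) simp
  also have "\<dots> = ennreal (omega \<beta> * ?n powr \<beta> * (2 * h * (E * r powr \<beta> * ((3 * ?n) powr \<alpha> * l powr \<alpha>))))"
  proof -
    have "0 \<le> omega \<beta> * ?n powr \<beta>" "0 \<le> 2 * h" using \<omega> h by simp_all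
    then show ?thesis by (simp only: ennreal_mult'[symmetric])
  qed
  also have "\<dots> = ennreal (riesz_cube_const \<alpha> \<beta> DIM('a) * l powr \<alpha> * (h * (omega \<beta> * r powr \<beta>)))"
    by (simp add: riesz_cube_const_def E_def mult_ac)
  also have "\<dots> = ennreal (riesz_cube_const \<alpha> \<beta> DIM('a) * l powr \<alpha>) * (ennreal h * ennreal (omega \<beta> * r powr \<beta>))"
  proof -
    have "0 \<le> riesz_cube_const \<alpha> \<beta> DIM('a)"
      using riesz_cube_const_pos[OF \<alpha>, of "DIM('a)"] by (simp add: less_imp_le)
    then have "0 \<le> riesz_cube_const \<alpha> \<beta> DIM('a) * l powr \<alpha>" "0 \<le> h"
      using h by simp_all
    then show ?thesis by (simp only: ennreal_mult'[symmetric])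
  qed
  finally show ?thesis unfolding L_def T_def .
qed

lemma choquet_riesz_le_level_covers:
  fixes x0 :: "'a::euclidean_space" and f :: "'a \<Rightarrow> real"
  assumes \<alpha>: "0 < \<alpha>" "\<alpha> < \<beta>" "\<beta> \<le> real DIM('a)" and l: "0 < l"
    and supp: "{x. f x \<noteq> 0} \<subseteq> cube x0 (2 * l)"
    and cov: "\<And>m. {x\<in>cube x0 (2 * l). \<bar>f x\<bar> > dyadic_height m} \<subseteq> (\<Union>i. ball (c m i) (r m i))"
    and r: "\<And>m i. 0 \<le> r m i" "\<And>m i. r m i \<le> real DIM('a) * l"
  shows "choquet \<beta> (cube x0 l) (\<lambda>x. \<bar>riesz \<alpha> f x\<bar>)
    \<le> ennreal (riesz_cube_const \<alpha> \<beta> DIM('a) * l powr \<alpha>) *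
      (\<Sum>m. ennreal (dyadic_height m) * (\<Sum>i. ennreal (omega \<beta> * r m i powr \<beta>)))"
proof -
  let ?n = "real DIM('a)"
  define L where "L = 12 * ?n * l"
  define w where "w m i p = ennreal (2 * dyadic_height m) * ennreal (annulus_weight \<alpha> ?n (r m i) (2 * ?n * l) p)"
    for m i p
  define lv where "lv m i p = annulus_level L (r m i) p" for m i p
  define Zs where "Zs m i p = annulus_indices L (c m i) (r m i) p" for m i p
  define dm where "dm j = fst (prod_decode j)" for j
  define di where "di j = fst (prod_decode (snd (prod_decode j)))" for j
  define dp where "dp j = snd (prod_decode (snd (prod_decode j)))" for j
  have "choquet \<beta> (cube x0 l) (\<lambda>x. \<bar>riesz \<alpha> f x\<bar>) \<le> ennreal (omega \<beta> * ?n powr \<beta>) *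
      (\<Sum>j. w (dm j) (di j) (dp j) * of_nat (card (Zs (dm j) (di j) (dp j)))
        * ennreal (dyadic_side L (lv (dm j) (di j) (dp j)) powr \<beta>))"
  proof (rule choquet_le_dyadic_sum)
    show "0 < L" "0 < \<beta>" using l \<alpha> by (simp_all add: L_def)
    show "finite (Zs (dm j) (di j) (dp j))" "Zs (dm j) (di j) (dp j) \<subseteq> PiE Basis (\<lambda>_. UNIV)" for j
      by (simp_all add: Zs_def annulus_indices_def finite_dyadic_ball_indices dyadic_ball_indices_subset)
    fix x assume "x \<in> cube x0 l"
    then have "ennreal \<bar>riesz \<alpha> f x\<bar>
        \<le> (\<Sum>m. \<Sum>i. \<Sum>p. w m i p * indicator (Zs m i p) (dyadic_index L (lv m i p) x))"
      unfolding w_def Zs_def lv_def L_def using \<alpha> by (intro abs_riesz_le_annulus_sum[OF \<alpha>(1) _ l supp cov r]) auto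
    also have "\<dots> = (\<Sum>j. w (dm j) (di j) (dp j) *
        indicator (Zs (dm j) (di j) (dp j)) (dyadic_index L (lv (dm j) (di j) (dp j)) x))"
      unfolding dm_def di_def dp_def by (rule suminf_prod_decode3[symmetric])
    finally show "ennreal \<bar>riesz \<alpha> f x\<bar> \<le> \<dots>" .
  qed
  also have "\<dots> = ennreal (omega \<beta> * ?n powr \<beta>) *
      (\<Sum>m. \<Sum>i. \<Sum>p. w m i p * of_nat (card (Zs m i p)) * ennreal (dyadic_side L (lv m i p) powr \<beta>))"
    unfolding dm_def di_def dp_def
    by (subst suminf_prod_decode3[where
          F = "\<lambda>m i p. w m i p * of_nat (card (Zs m i p)) * ennreal (dyadic_side L (lv m i p) powr \<beta>)"]) (rule refl)
  also have "\<dots> = (\<Sum>m. \<Sum>i. ennreal (omega \<beta> * ?n powr \<beta>) *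
      (\<Sum>p. w m i p * of_nat (card (Zs m i p)) * ennreal (dyadic_side L (lv m i p) powr \<beta>)))"
    by (simp only: ennreal_suminf_cmult)
  also have "\<dots> \<le> (\<Sum>m. \<Sum>i. ennreal (riesz_cube_const \<alpha> \<beta> DIM('a) * l powr \<alpha>) *
      (ennreal (dyadic_height m) * ennreal (omega \<beta> * r m i powr \<beta>)))"
    unfolding w_def Zs_def lv_def L_def using \<alpha> l r less_imp_le[OF dyadic_height_pos]
    by (intro suminf_le annulus_cubes_content_le) auto
  also have "\<dots> = ennreal (riesz_cube_const \<alpha> \<beta> DIM('a) * l powr \<alpha>) *
      (\<Sum>m. ennreal (dyadic_height m) * (\<Sum>i. ennreal (omega \<beta> * r m i powr \<beta>)))"
    by (simp only: ennreal_suminf_cmult)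
  finally show ?thesis .
qed

lemma weighted_level_covers_le_choquet:
  fixes f :: "'a::euclidean_space \<Rightarrow> real"
  assumes "\<And>m. (\<Sum>i. ennreal (omega \<beta> * r m i powr \<beta>))
      \<le> hcontent \<beta> {x\<in>Q. \<bar>f x\<bar> > dyadic_height m} + ennreal (\<delta> m)"
  shows "(\<Sum>m. ennreal (dyadic_height m) * (\<Sum>i. ennreal (omega \<beta> * r m i powr \<beta>)))
    \<le> 2 * choquet \<beta> Q (\<lambda>x. \<bar>f x\<bar>) + (\<Sum>m. ennreal (dyadic_height m * \<delta> m))"
proof -
  let ?E = "\<lambda>m. {x\<in>Q. \<bar>f x\<bar> > dyadic_height m}"
  have "(\<Sum>m. ennreal (dyadic_height m) * (\<Sum>i. ennreal (omega \<beta> * r m i powr \<beta>)))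
      \<le> (\<Sum>m. ennreal (dyadic_height m) * hcontent \<beta> (?E m) + ennreal (dyadic_height m * \<delta> m))"
  proof (intro suminf_le)
    fix m
    have "ennreal (dyadic_height m) * (\<Sum>i. ennreal (omega \<beta> * r m i powr \<beta>))
        \<le> ennreal (dyadic_height m) * (hcontent \<beta> (?E m) + ennreal (\<delta> m))"
      using assms[of m] by (rule mult_left_mono) simp
    also have "\<dots> = ennreal (dyadic_height m) * hcontent \<beta> (?E m) + ennreal (dyadic_height m * \<delta> m)"
      using less_imp_le[OF dyadic_height_pos[of m]] by (simp add: distrib_left ennreal_mult')
    finally show "ennreal (dyadic_height m) * (\<Sum>i. ennreal (omega \<beta> * r m i powr \<beta>))
        \<le> ennreal (dyadic_height m) * hcontent \<beta> (?E m) + ennreal (dyadic_height m * \<delta> m)" .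
  qed auto
  also have "\<dots> = (\<Sum>m. ennreal (dyadic_height m) * hcontent \<beta> (?E m)) + (\<Sum>m. ennreal (dyadic_height m * \<delta> m))"
    by (rule suminf_add[symmetric]) auto
  also have "(\<Sum>m. ennreal (dyadic_height m) * hcontent \<beta> (?E m)) \<le> 2 * choquet \<beta> Q (\<lambda>x. \<bar>f x\<bar>)"
    unfolding choquet_def by (rule suminf_dyadic_height_le_integral) (auto intro!: hcontent_mono)
  finally show ?thesis by (simp add: add_right_mono)
qed

lemma level_covers_exist:
  fixes x0 :: "'a::euclidean_space" and f :: "'a \<Rightarrow> real"
  assumes \<beta>: "0 < \<beta>" and l: "0 < l" and \<eta>: "0 < \<eta>"
  obtains c r where
    "\<And>m. {x\<in>cube x0 (2 * l). \<bar>f x\<bar> > dyadic_height m} \<subseteq> (\<Union>i. ball (c m i) (r m i))"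
    "\<And>m i. 0 \<le> r m i" "\<And>m i. r m i \<le> real DIM('a) * l"
    "(\<Sum>m. ennreal (dyadic_height m) * (\<Sum>i. ennreal (omega \<beta> * r m i powr \<beta>)))
       \<le> 2 * choquet \<beta> (cube x0 (2 * l)) (\<lambda>x. \<bar>f x\<bar>) + ennreal \<eta>"
proof -
  define E where "E m = {x\<in>cube x0 (2 * l). \<bar>f x\<bar> > dyadic_height m}" for m
  define \<delta> where "\<delta> m = \<eta> / 2 ^ Suc m / dyadic_height m" for m
  define good where "good m cr \<longleftrightarrow> (\<forall>i. 0 \<le> snd cr i) \<and> (\<forall>i. snd cr i \<le> real DIM('a) * l) \<and>
      E m \<subseteq> (\<Union>i. ball (fst cr i) (snd cr i)) \<and>
      (\<Sum>i. ennreal (omega \<beta> * snd cr i powr \<beta>)) < hcontent \<beta> (E m) + ennreal (\<delta> m)"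
    for m and cr :: "(nat \<Rightarrow> 'a) \<times> (nat \<Rightarrow> real)"
  have "\<exists>cr. good m cr" for m
  proof -
    have "E m \<subseteq> ball x0 (real DIM('a) * l)"
      using double_cube_subset_ball[OF l] by (auto simp: E_def)
    moreover have "0 < real DIM('a) * l" "0 < \<delta> m" using l \<eta> by (simp_all add: \<delta>_def)
    ultimately obtain c r where "\<And>i. 0 \<le> r i" "\<And>i. r i \<le> real DIM('a) * l" "E m \<subseteq> (\<Union>i. ball (c i) (r i))"
      "(\<Sum>i. ennreal (omega \<beta> * r i powr \<beta>)) < hcontent \<beta> (E m) + ennreal (\<delta> m)"
      by (rule hcontent_approx_cover_bounded[OF \<beta>]) blast
    then show ?thesis unfolding good_def by (intro exI[of _ "(c, r)"]) auto
  qed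
  then obtain CR where "\<And>m. good m (CR m)" by metis
  then have CR: "\<And>m i. 0 \<le> snd (CR m) i" "\<And>m i. snd (CR m) i \<le> real DIM('a) * l"
    "\<And>m. E m \<subseteq> (\<Union>i. ball (fst (CR m) i) (snd (CR m) i))"
    "\<And>m. (\<Sum>i. ennreal (omega \<beta> * snd (CR m) i powr \<beta>)) \<le> hcontent \<beta> (E m) + ennreal (\<delta> m)"
    unfolding good_def by (blast intro: less_imp_le)+
  have "(\<Sum>m. ennreal (dyadic_height m * \<delta> m)) = ennreal \<eta>"
  proof -
    have "(\<lambda>m. \<eta> * (1/2) ^ Suc m) sums \<eta>"
      using sums_mult[OF power_half_series, of \<eta>] by simp
    moreover have "dyadic_height m * \<delta> m = \<eta> * (1/2) ^ Suc m" for m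
      using dyadic_height_pos[of m] by (simp add: \<delta>_def field_simps less_imp_neq[symmetric])
    ultimately show ?thesis using \<eta> by (simp only:) (intro suminf_ennreal_eq; simp)
  qed
  moreover have "(\<Sum>m. ennreal (dyadic_height m) * (\<Sum>i. ennreal (omega \<beta> * snd (CR m) i powr \<beta>)))
      \<le> 2 * choquet \<beta> (cube x0 (2 * l)) (\<lambda>x. \<bar>f x\<bar>) + (\<Sum>m. ennreal (dyadic_height m * \<delta> m))"
    by (rule weighted_level_covers_le_choquet) (use CR(4) in \<open>simp add: E_def\<close>)
  ultimately show ?thesis
    using that[of "\<lambda>m. fst (CR m)" "\<lambda>m. snd (CR m)"] CR(1-3) by (simp add: E_def)
qed

lemma choquet_riesz_cube_le:
  fixes x0 :: "'a::euclidean_space" and f :: "'a \<Rightarrow> real"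
  assumes \<alpha>: "0 < \<alpha>" "\<alpha> < \<beta>" "\<beta> \<le> real DIM('a)" and l: "0 < l"
    and supp: "{x. f x \<noteq> 0} \<subseteq> cube x0 (2 * l)"
  shows "choquet \<beta> (cube x0 l) (\<lambda>x. \<bar>riesz \<alpha> f x\<bar>)
    \<le> ennreal (2 * riesz_cube_const \<alpha> \<beta> DIM('a) * l powr \<alpha>) * choquet \<beta> (cube x0 (2 * l)) (\<lambda>x. \<bar>f x\<bar>)"
proof (rule ennreal_le_epsilon)
  let ?J = "choquet \<beta> (cube x0 (2 * l)) (\<lambda>x. \<bar>f x\<bar>)"
  define A where "A = riesz_cube_const \<alpha> \<beta> DIM('a) * l powr \<alpha>"
  have A: "0 < A" using riesz_cube_const_pos[OF \<alpha>(1)] l by (simp add: A_def)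
  fix e :: real assume e: "0 < e"
  have "0 < \<beta>" "0 < e / A" using \<alpha> e A by simp_all
  then obtain c r where cov: "\<And>m. {x\<in>cube x0 (2 * l). \<bar>f x\<bar> > dyadic_height m} \<subseteq> (\<Union>i. ball (c m i) (r m i))"
    and r: "\<And>m i. 0 \<le> r m i" "\<And>m i. r m i \<le> real DIM('a) * l"
    and sum: "(\<Sum>m. ennreal (dyadic_height m) * (\<Sum>i. ennreal (omega \<beta> * r m i powr \<beta>))) \<le> 2 * ?J + ennreal (e / A)"
    using level_covers_exist[OF _ l] by blast
  have "choquet \<beta> (cube x0 l) (\<lambda>x. \<bar>riesz \<alpha> f x\<bar>)
      \<le> ennreal A * (\<Sum>m. ennreal (dyadic_height m) * (\<Sum>i. ennreal (omega \<beta> * r m i powr \<beta>)))"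
    unfolding A_def by (rule choquet_riesz_le_level_covers[OF \<alpha> l supp cov r])
  also have "\<dots> \<le> ennreal A * (2 * ?J + ennreal (e / A))"
    by (rule mult_left_mono[OF sum]) simp
  also have "\<dots> = ennreal A * 2 * ?J + ennreal A * ennreal (e / A)"
    by (simp add: distrib_left mult.assoc)
  also have "ennreal A * 2 = ennreal (2 * riesz_cube_const \<alpha> \<beta> DIM('a) * l powr \<alpha>)"
    using ennreal_mult'[of 2 A] by (simp add: A_def mult_ac)
  also have "ennreal A * ennreal (e / A) = ennreal e"
    using A e by (simp add: ennreal_mult[symmetric])
  finally show "choquet \<beta> (cube x0 l) (\<lambda>x. \<bar>riesz \<alpha> f x\<bar>)
      \<le> ennreal (2 * riesz_cube_const \<alpha> \<beta> DIM('a) * l powr \<alpha>) * ?J + ennreal e" .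
qed

theorem lemma4p3:
  fixes \<alpha> \<beta> :: real
  assumes "0 < \<alpha>" and "\<alpha> < \<beta>" and "\<beta> \<le> real DIM('a::euclidean_space)"
  shows "\<exists>C>0. \<forall>(x0::'a) (l::real) (f::'a \<Rightarrow> real).
           0 < l \<longrightarrow> f \<in> borel_measurable lebesgue \<longrightarrow>
           closure {x. f x \<noteq> 0} \<subseteq> cube x0 (2 * l) \<longrightarrow>
           choquet \<beta> (cube x0 l) (\<lambda>x. \<bar>riesz \<alpha> f x\<bar>)
             \<le> ennreal (C * l powr \<alpha>) * choquet \<beta> (cube x0 (2 * l)) (\<lambda>x. \<bar>f x\<bar>)"
proof (intro exI[of _ "2 * riesz_cube_const \<alpha> \<beta> DIM('a)"] conjI allI impI)
  show "0 < 2 * riesz_cube_const \<alpha> \<beta> DIM('a)"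
    using riesz_cube_const_pos[OF assms(1)] by simp
  fix x0 :: 'a and l :: real and f :: "'a \<Rightarrow> real"
  assume l: "0 < l" and "f \<in> borel_measurable lebesgue" and supp: "closure {x. f x \<noteq> 0} \<subseteq> cube x0 (2 * l)"
  show "choquet \<beta> (cube x0 l) (\<lambda>x. \<bar>riesz \<alpha> f x\<bar>)
      \<le> ennreal (2 * riesz_cube_const \<alpha> \<beta> DIM('a) * l powr \<alpha>) * choquet \<beta> (cube x0 (2 * l)) (\<lambda>x. \<bar>f x\<bar>)"
    by (rule choquet_riesz_cube_le[OF assms l order.trans[OF closure_subset supp]])
qed

end
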